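(* Let $\mathcal{M}_\Sigma$ be a trace monoid, let $p\in(0,p_\Sigma)$ and let $a_1\in\Sigma$. Then $\mu_{\Sigma\setminus\{a_1\}}(p)>0$, and the real number $$r=p\,\frac{\mu_{\Sigma\setminus\mathscr{L}(a_1)}(p)}{\mu_{\Sigma\setminus\{a_1\}}(p)}$$ satisfies $r=1-\mu_\Sigma(p)/\mu_{\Sigma\setminus\{a_1\}}(p)$. Furthermore, let $T\subseteq\Sigma$ with $a_1\in T$, let $\xi$ be a random trace with law $D^{p}_{\Sigma,T}$, and let $\xi=U_0\cdot\ldots\cdot U_K$ be its decomposition with $U_0,\dots,U_{K-1}\in\mathrm{Pyr}(a_1)$ and $U_K\in\mathcal{M}_{\Sigma\setminus\{a_1\}}$ (so $K=|\xi|_{a_1}$). Then: (1) $K$ is geometric with parameter $r$: $\mathbb{P}(K=k)=(1-r)r^k$ for all integers $k\geqslant0$; (2) for every $k\geqslant0$, conditionally on $\{K=k\}$: (a) $U_0,\dots,U_k$ are independent; (b) each of the traces $U_i\cdot a_1^{-1}$ for $0\leqslant i\leqslant k-1$ (i.e. the unique trace $w$ with $U_i=w\cdot a_1$) has law $D^{p}_{\Sigma\setminus\{a_1\},\mathscr{L}(a_1)}$; (c) $U_k$ has law $D^{p}_{\Sigma\setminus\{a_1\},T}$.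
   Context: Let $\Sigma$ be a finite alphabet and $\mathcal{R}$ a reflexive and symmetric binary relation on $\Sigma$. The trace monoid $\mathcal{M}_\Sigma$ is the quotient of $\Sigma^*$ by the congruence generated by $ab=ba$ for all $(a,b)\notin\mathcal{R}$; the unit is $\mathbf{e}$. For $\Sigma'\subseteq\Sigma$, $\mathcal{M}_{\Sigma'}$ is the submonoid generated by $\Sigma'$. $|x|$ is the length of $x$, $|x|_a$ the number of occurrences of $a$, and $\max(x)$ the set of letters $a$ with $x=y\cdot a$ for some trace $y$. $\mathscr{L}(a)=\{b\in\Sigma:(a,b)\in\mathcal{R}\}$. $\mathrm{Pyr}(a_1)=\{z\cdot a_1: z\in\mathcal{M}_{\Sigma\setminus\{a_1\}},\ \max(z)\subseteq\mathscr{L}(a_1)\}$; every trace has a unique factorization $u_0\cdots u_k$ with $u_0,\dots,u_{k-1}\in\mathrm{Pyr}(a_1)$, $u_k\in\mathcal{M}_{\Sigma\setminus\{a_1\}}$. For $S\subseteq\Sigma$, a clique of $S$ is a subset of $S$ of pairwise non-$\mathcal{R}$-related letters (empty set included); $\mu_S(X)=\sum_{\gamma\text{ clique of }S}(-1)^{|\gamma|}X^{|\gamma|}$, $\mu_\emptyset=1$. For $S\neq\emptyset$, $p_S$ is the unique root of smallest modulus of $\mu_S$ (real, $0<p_S\leqslant1$); $p_\emptyset=+\infty$. For $p\in(0,p_S)$, $\sum_{x\in\mathcal{M}_S}p^{|x|}=1/\mu_S(p)<\infty$ and $B_{S,p}$ is the probability distribution on $\mathcal{M}_S$ with $B_{S,p}(\{x\})=\mu_S(p)p^{|x|}$.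 For $T\subseteq\Sigma$, $D^{p}_{S,T}$ denotes the conditional distribution $B_{S,p}(\,\cdot\mid\max(\xi)\subseteq T)$ on $\mathcal{M}_S$ (this event has positive probability). *)

theory Defs
  imports "HOL-Analysis.Analysis"
begin

text \<open>Trace monoids. The dependence relation R is a set of pairs of letters.
  Words are lists; traces are equivalence classes of words (sets of lists).\<close>

definition swap_step :: "('a \<times> 'a) set \<Rightarrow> ('a list \<times> 'a list) set" where
  "swap_step R = {(u @ [a, b] @ v, u @ [b, a] @ v) | u v a b. (a, b) \<notin> R}"

definition teq :: "('a \<times> 'a) set \<Rightarrow> ('a list \<times> 'a list) set" where
  "teq R = (swap_step R \<union> (swap_step R)\<inverse>)\<^sup>*"

definition tr :: "('a \<times> 'a) set \<Rightarrow> 'a list \<Rightarrow> 'a list set" where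
  "tr R w = {v. (w, v) \<in> teq R}"

definition tmon :: "('a \<times> 'a) set \<Rightarrow> 'a set \<Rightarrow> 'a list set set" where
  "tmon R S = tr R ` lists S"

definition rep :: "'a list set \<Rightarrow> 'a list" where
  "rep x = (SOME w. w \<in> x)"

definition tconc :: "('a \<times> 'a) set \<Rightarrow> 'a list set \<Rightarrow> 'a list set \<Rightarrow> 'a list set" where
  "tconc R x y = tr R (rep x @ rep y)"

definition tunit :: "('a \<times> 'a) set \<Rightarrow> 'a list set" where
  "tunit R = tr R []"

definition tprod :: "('a \<times> 'a) set \<Rightarrow> 'a list set list \<Rightarrow> 'a list set" where
  "tprod R us = foldr (tconc R) us (tunit R)"

definition tlen :: "'a list set \<Rightarrow> nat" where
  "tlen x = length (rep x)"

definition tcount :: "'a list set \<Rightarrow> 'a \<Rightarrow> nat" where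
  "tcount x a = count_list (rep x) a"

definition tmax :: "('a \<times> 'a) set \<Rightarrow> 'a list set \<Rightarrow> 'a set" where
  "tmax R x = {a. \<exists>y \<in> range (tr R). x = tconc R y (tr R [a])}"

definition Lnb :: "('a \<times> 'a) set \<Rightarrow> 'a set \<Rightarrow> 'a \<Rightarrow> 'a set" where
  "Lnb R Sg a = {b \<in> Sg. (a, b) \<in> R}"

definition Pyr :: "('a \<times> 'a) set \<Rightarrow> 'a set \<Rightarrow> 'a \<Rightarrow> 'a list set set" where
  "Pyr R Sg a1 = {tconc R z (tr R [a1]) | z. z \<in> tmon R (Sg - {a1}) \<and> tmax R z \<subseteq> Lnb R Sg a1}"

text \<open>The (unique) decomposition u_0 ... u_k of a trace, as a list of length k+1.\<close>
definition pyr_decomp :: "('a \<times> 'a) set \<Rightarrow> 'a set \<Rightarrow> 'a \<Rightarrow> 'a list set \<Rightarrow> 'a list set list" where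
  "pyr_decomp R Sg a1 x = (THE us. us \<noteq> [] \<and> tprod R us = x \<and>
      (\<forall>i < length us - 1. us ! i \<in> Pyr R Sg a1) \<and> last us \<in> tmon R (Sg - {a1}))"

definition cliques :: "('a \<times> 'a) set \<Rightarrow> 'a set \<Rightarrow> 'a set set" where
  "cliques R S = {\<gamma>. \<gamma> \<subseteq> S \<and> (\<forall>a\<in>\<gamma>. \<forall>b\<in>\<gamma>. a \<noteq> b \<longrightarrow> (a, b) \<notin> R)}"

definition mu :: "('a \<times> 'a) set \<Rightarrow> 'a set \<Rightarrow> 'b::comm_ring_1 \<Rightarrow> 'b" where
  "mu R S X = (\<Sum>\<gamma>\<in>cliques R S. (-1) ^ card \<gamma> * X ^ card \<gamma>)"

definition p_root :: "('a \<times> 'a) set \<Rightarrow> 'a set \<Rightarrow> real" where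
  "p_root R S = Inf (cmod ` {z::complex. mu R S z = 0})"

definition B_weight :: "('a \<times> 'a) set \<Rightarrow> 'a set \<Rightarrow> real \<Rightarrow> 'a list set \<Rightarrow> real" where
  "B_weight R S p x = (if x \<in> tmon R S then mu R S p * p ^ tlen x else 0)"

definition B_prob :: "('a \<times> 'a) set \<Rightarrow> 'a set \<Rightarrow> real \<Rightarrow> 'a list set set \<Rightarrow> real" where
  "B_prob R S p A = infsum (B_weight R S p) A"

definition D_prob :: "('a \<times> 'a) set \<Rightarrow> 'a set \<Rightarrow> 'a set \<Rightarrow> real \<Rightarrow> 'a list set set \<Rightarrow> real" where
  "D_prob R S T p A = B_prob R S p (A \<inter> {x. tmax R x \<subseteq> T}) / B_prob R S p {x. tmax R x \<subseteq> T}"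

end

theory Submission
  imports Defs
begin

text \<open>Every trace factors uniquely as \<open>U\<^sub>0 \<cdots> U\<^bsub>K-1\<^esub> U\<^sub>K\<close>, with pyramids
  \<open>U\<^sub>i = w\<^sub>i a\<^sub>1\<close> (\<open>w\<^sub>i \<in> \<M>\<^bsub>\<Sigma>-{a\<^sub>1}\<^esub>\<close>, \<open>max w\<^sub>i \<subseteq> \<L>(a\<^sub>1)\<close>) and \<open>U\<^sub>K \<in> \<M>\<^bsub>\<Sigma>-{a\<^sub>1}\<^esub>\<close>.
  Under this bijection \<open>|\<xi>| = \<Sum>(|w\<^sub>i| + 1) + |U\<^sub>K|\<close>, and for \<open>a\<^sub>1 \<in> T\<close> the condition
  \<open>max \<xi> \<subseteq> T\<close> only constrains \<open>U\<^sub>K\<close>; so the weight \<open>p\<^bsup>|\<xi>|\<^esup>\<close> restricted to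
  \<open>{K = k}\<close> is a product measure, whose total mass is \<open>(p Z\<^sub>\<L>)\<^sup>k Z\<^sub>T\<close> for the generating
  functions \<open>Z\<close> of traces of \<open>\<M>\<^bsub>\<Sigma>-{a\<^sub>1}\<^esub>\<close> with prescribed maximal letters. The same
  decomposition, together with the deletion recurrence
  \<open>\<mu>\<^sub>\<Sigma> = \<mu>\<^bsub>\<Sigma>-{a}\<^esub> - X \<mu>\<^bsub>\<Sigma>-\<L>(a)\<^esub>\<close>, proves by induction on \<open>\<Sigma>\<close> that
  \<open>\<Sum>\<^bsub>max x \<subseteq> T\<^esub> p\<^bsup>|x|\<^esup> = \<mu>\<^bsub>\<Sigma>-T\<^esub>(p) / \<mu>\<^sub>\<Sigma>(p)\<close> as long as all \<open>\<mu>\<^bsub>S'\<^esub>(p)\<close> are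
  positive; this identifies \<open>p Z\<^sub>\<L> = r\<close> and gives both the geometric law of \<open>K\<close> and the
  product form of the conditional law.\<close>

lemma has_sum_Sigma_nonneg:
  fixes f :: "'a \<times> 'b \<Rightarrow> real"
  assumes "\<And>x y. x \<in> A \<Longrightarrow> y \<in> B x \<Longrightarrow> f (x, y) \<ge> 0"
    and "\<And>x. x \<in> A \<Longrightarrow> ((\<lambda>y. f (x, y)) has_sum g x) (B x)"
    and "(g has_sum s) A"
  shows "(f has_sum s) (Sigma A B)"
  using assms by (intro has_sum_SigmaI summable_on_SigmaI[where g = g]) (auto dest: has_sum_imp_summable)

lemma has_sum_product_nonneg:
  fixes f g :: "_ \<Rightarrow> real"
  assumes "\<And>x. x \<in> A \<Longrightarrow> f x \<ge> 0" "\<And>y. y \<in> B \<Longrightarrow> g y \<ge> 0"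
    and "(f has_sum s) A" "(g has_sum t) B"
  shows "((\<lambda>(x, y). f x * g y) has_sum (s * t)) (A \<times> B)"
proof (rule has_sum_Sigma_nonneg)
  show "((\<lambda>y. case (x, y) of (x, y) \<Rightarrow> f x * g y) has_sum (f x * t)) B" for x
    using has_sum_cmult_right[OF assms(4), of "f x"] by simp
  show "((\<lambda>x. f x * t) has_sum (s * t)) A"
    using has_sum_cmult_left[OF assms(3)] .
qed (use assms in simp)

lemma has_sum_prod_list_lists_length:
  fixes f :: "_ \<Rightarrow> real"
  assumes "\<And>x. x \<in> A \<Longrightarrow> f x \<ge> 0" "(f has_sum s) A"
  shows "((\<lambda>xs. prod_list (map f xs)) has_sum s ^ k) {xs. set xs \<subseteq> A \<and> length xs = k}"
proof (induction k)
  case 0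
  have "{xs. set xs \<subseteq> A \<and> length xs = 0} = {[]}" by auto
  then show ?case by (simp add: has_sum_finite_iff)
next
  case (Suc k)
  have "prod_list (map f xs) \<ge> 0" if "xs \<in> {xs. set xs \<subseteq> A \<and> length xs = k}" for xs
    using that assms(1) by (intro prod_list_nonneg) auto
  then have "((\<lambda>(xs, x). prod_list (map f xs) * f x) has_sum (s ^ k * s))
      ({xs. set xs \<subseteq> A \<and> length xs = k} \<times> A)"
    by (intro has_sum_product_nonneg Suc.IH assms)
  moreover have "inj_on (\<lambda>(xs, x). x # xs) ({xs. set xs \<subseteq> A \<and> length xs = k} \<times> A)"
    by (auto simp: inj_on_def)
  ultimately show ?case
    unfolding lists_length_Suc_eq
    by (subst has_sum_reindex) (auto simp: comp_def case_prod_unfold mult.commute)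
qed

lemma has_sum_partition_nonneg:
  fixes f :: "'a \<Rightarrow> real" and g :: "'a \<Rightarrow> 'b"
  assumes "\<And>x. x \<in> A \<Longrightarrow> f x \<ge> 0"
    and "\<And>k. (f has_sum s k) {x \<in> A. g x = k}" and "(s has_sum t) UNIV"
  shows "(f has_sum t) A"
proof -
  have "((\<lambda>(k, x). f x) has_sum t) (Sigma UNIV (\<lambda>k. {x \<in> A. g x = k}))"
    using assms by (intro has_sum_Sigma_nonneg) auto
  moreover have "bij_betw (\<lambda>x. (g x, x)) A (Sigma UNIV (\<lambda>k. {x \<in> A. g x = k}))"
    by (rule bij_betwI[of _ _ _ snd]) auto
  ultimately show ?thesis
    using has_sum_reindex_bij_betw[of "\<lambda>x. (g x, x)" A _ "\<lambda>(k, x). f x" t] by simp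
qed
section \<open>Trace equivalence\<close>

lemma teq_refl [simp]: "(u, u) \<in> teq R"
  by (simp add: teq_def)

lemma teq_sym: "(u, v) \<in> teq R \<Longrightarrow> (v, u) \<in> teq R"
proof -
  assume "(u, v) \<in> teq R"
  then have "(v, u) \<in> ((swap_step R \<union> (swap_step R)\<inverse>)\<inverse>)\<^sup>*"
    unfolding teq_def by (simp add: rtrancl_converse)
  moreover have "(swap_step R \<union> (swap_step R)\<inverse>)\<inverse> = swap_step R \<union> (swap_step R)\<inverse>"
    by auto
  ultimately show ?thesis
    unfolding teq_def by simp
qed

lemma teq_trans: "(u, v) \<in> teq R \<Longrightarrow> (v, w) \<in> teq R \<Longrightarrow> (u, w) \<in> teq R"
  unfolding teq_def by (rule rtrancl_trans)

lemma teq_swap: "(d, e) \<notin> R \<Longrightarrow> (x @ [d, e] @ y, x @ [e, d] @ y) \<in> teq R"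
  unfolding teq_def swap_step_def by (rule r_into_rtrancl) blast

lemma swap_step_sym_cases:
  assumes "sym R" "(s, t) \<in> swap_step R \<union> (swap_step R)\<inverse>"
  obtains x y d e where "s = x @ [d, e] @ y" "t = x @ [e, d] @ y" "(d, e) \<notin> R"
  using assms unfolding swap_step_def sym_def by blast

lemma teq_mset: "(s, t) \<in> teq R \<Longrightarrow> mset s = mset t"
  unfolding teq_def by (induct rule: rtrancl_induct) (auto simp: swap_step_def)

lemma teq_length: "(s, t) \<in> teq R \<Longrightarrow> length s = length t"
  by (metis size_mset teq_mset)

lemma teq_set: "(s, t) \<in> teq R \<Longrightarrow> set s = set t"
  by (metis set_mset_mset teq_mset)

lemma teq_count_list: "(s, t) \<in> teq R \<Longrightarrow> count_list s a = count_list t a"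
  by (metis count_mset teq_mset)

lemma swap_step_append: "(s, t) \<in> swap_step R \<Longrightarrow> (w @ s @ z, w @ t @ z) \<in> swap_step R"
proof -
  assume "(s, t) \<in> swap_step R"
  then obtain u v a b where "s = u @ [a, b] @ v" "t = u @ [b, a] @ v" "(a, b) \<notin> R"
    by (auto simp: swap_step_def)
  then show ?thesis
    unfolding swap_step_def by (intro CollectI exI[of _ "w @ u"] exI[of _ "v @ z"]) auto
qed

lemma teq_append_context: "(s, t) \<in> teq R \<Longrightarrow> (w @ s @ z, w @ t @ z) \<in> teq R"
  unfolding teq_def
proof (induct rule: rtrancl_induct)
  case (step y y')
  then have "(w @ y @ z, w @ y' @ z) \<in> swap_step R \<union> (swap_step R)\<inverse>"
    using swap_step_append by blast
  with step.hyps(3) show ?case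
    by (rule rtrancl_into_rtrancl)
qed simp

lemma teq_append: "(s, t) \<in> teq R \<Longrightarrow> (s', t') \<in> teq R \<Longrightarrow> (s @ s', t @ t') \<in> teq R"
  using teq_append_context[of s t R "[]" s'] teq_append_context[of s' t' R t "[]"]
  by (auto intro: teq_trans)

text \<open>Levi's lemma for last letters: either the last letters coincide, or they commute and each
  is a maximal letter of the other word.\<close>

definition last_letter_rel :: "('a \<times> 'a) set \<Rightarrow> 'a list \<Rightarrow> 'a \<Rightarrow> 'a list \<Rightarrow> 'a \<Rightarrow> bool" where
  "last_letter_rel R u a v b \<longleftrightarrow> (a = b \<and> (u, v) \<in> teq R) \<or>
     (a \<noteq> b \<and> (a, b) \<notin> R \<and> (\<exists>w. (u, w @ [b]) \<in> teq R \<and> (v, w @ [a]) \<in> teq R))"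

lemma last_letter_rel_teq_right:
  "last_letter_rel R u a v b \<Longrightarrow> (v, v') \<in> teq R \<Longrightarrow> last_letter_rel R u a v' b"
  unfolding last_letter_rel_def using teq_trans teq_sym by blast

lemma last_letter_rel_swap:
  assumes "sym R"
    and IH: "\<And>u' a' v' b'. length u' < length u \<Longrightarrow> (u' @ [a'], v' @ [b']) \<in> teq R \<Longrightarrow>
      last_letter_rel R u' a' v' b'"
    and rel: "last_letter_rel R u a (x @ [d]) e" and de: "(d, e) \<notin> R" "d \<noteq> e"
    and len: "length x < length u"
  shows "last_letter_rel R u a (x @ [e]) d"
proof -
  have ed: "(e, d) \<notin> R" using de(1) \<open>sym R\<close> by (auto simp: sym_def)
  from rel consider "a = e" "(u, x @ [d]) \<in> teq R"
    | w where "a \<noteq> e" "(a, e) \<notin> R" "(u, w @ [e]) \<in> teq R" "(x @ [d], w @ [a]) \<in> teq R"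
    unfolding last_letter_rel_def by blast
  then show ?thesis
  proof cases
    case 1
    then show ?thesis using de(2) ed unfolding last_letter_rel_def by auto
  next
    case (2 w)
    from IH[OF len 2(4)] consider "d = a" "(x, w) \<in> teq R"
      | w' where "d \<noteq> a" "(d, a) \<notin> R" "(x, w' @ [a]) \<in> teq R" "(w, w' @ [d]) \<in> teq R"
      unfolding last_letter_rel_def by blast
    then show ?thesis
    proof cases
      case 1
      have "(w @ [e], x @ [e]) \<in> teq R"
        using teq_append[OF teq_sym[OF 1(2)] teq_refl[of "[e]"]] .
      then show ?thesis
        using 1 2(3) teq_trans unfolding last_letter_rel_def by blast
    next
      case (2 w')
      have "(u, w' @ [d, e] @ []) \<in> teq R"
        using \<open>(u, w @ [e]) \<in> teq R\<close> teq_append[OF 2(4) teq_refl[of "[e]"]] teq_trans by fastforce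
      then have u: "(u, (w' @ [e]) @ [d]) \<in> teq R"
        using teq_swap[OF de(1)] teq_trans by fastforce
      have "(x @ [e], w' @ [a, e] @ []) \<in> teq R"
        using teq_append[OF 2(3) teq_refl[of "[e]"]] by simp
      then have x: "(x @ [e], (w' @ [e]) @ [a]) \<in> teq R"
        using teq_swap[OF \<open>(a, e) \<notin> R\<close>] teq_trans by fastforce
      have "(a, d) \<notin> R" using 2(2) \<open>sym R\<close> by (auto simp: sym_def)
      then show ?thesis
        using u x 2(1) unfolding last_letter_rel_def by blast
    qed
  qed
qed

lemma teq_snoc_last_letter:
  assumes "sym R" "(u @ [a], v @ [b]) \<in> teq R"
  shows "last_letter_rel R u a v b"
proof -
  have "length u = n \<Longrightarrow> (u @ [a], t) \<in> teq R \<Longrightarrow> t = v @ [b] \<Longrightarrow> last_letter_rel R u a v b"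
    for n u a t v b
  proof (induction n arbitrary: u a t v b rule: less_induct)
    case (less n)
    from less.prems(2) have "(u @ [a], t) \<in> (swap_step R \<union> (swap_step R)\<inverse>)\<^sup>*"
      by (simp add: teq_def)
    then show ?case using less.prems(3)
    proof (induction t arbitrary: v b rule: rtrancl_induct)
      case base
      then show ?case by (simp add: last_letter_rel_def)
    next
      case (step m t)
      obtain x y d e where m: "m = x @ [d, e] @ y" and t: "t = x @ [e, d] @ y" and de: "(d, e) \<notin> R"
        using swap_step_sym_cases[OF assms(1) step.hyps(2)] .
      show ?case
      proof (cases y rule: rev_cases)
        case Nil
        show ?thesis
        proof (cases "d = e")
          case True
          then show ?thesis using step m t by simp
        next
          case False
          have "(u @ [a], m) \<in> teq R"
            using step.hyps(1) by (simp add: teq_def)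
          then have "length (u @ [a]) = length m"
            by (rule teq_length)
          then have "length x < length u" using m Nil by simp
          moreover have "last_letter_rel R u a (x @ [d]) e"
            using step.IH m Nil by simp
          moreover have "length u' < length u \<Longrightarrow> (u' @ [a'], v' @ [b']) \<in> teq R \<Longrightarrow>
              last_letter_rel R u' a' v' b'" for u' a' v' b'
            using less.IH less.prems(1) by blast
          ultimately have "last_letter_rel R u a (x @ [e]) d"
            using last_letter_rel_swap[OF assms(1) _ _ de False] by blast
          then show ?thesis using step.prems t Nil by simp
        qed
      next
        case (snoc y' g)
        have "last_letter_rel R u a (x @ [d, e] @ y') g"
          using step.IH m snoc by simp
        then have "last_letter_rel R u a (x @ [e, d] @ y') g"
          by (rule last_letter_rel_teq_right[OF _ teq_swap[OF de]])
        then show ?thesis using step.prems t snoc by simp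
      qed
    qed
  qed
  with assms(2) show ?thesis by blast
qed

lemma teq_snoc_cancel: "sym R \<Longrightarrow> (u @ [a], v @ [a]) \<in> teq R \<Longrightarrow> (u, v) \<in> teq R"
  using teq_snoc_last_letter unfolding last_letter_rel_def by fastforce

lemma tr_eqI: "(u, v) \<in> teq R \<Longrightarrow> tr R u = tr R v"
  unfolding tr_def using teq_trans teq_sym by blast

lemma tr_eq_iff: "tr R u = tr R v \<longleftrightarrow> (u, v) \<in> teq R"
proof
  assume "tr R u = tr R v"
  moreover have "v \<in> tr R v" by (simp add: tr_def)
  ultimately have "v \<in> tr R u" by simp
  then show "(u, v) \<in> teq R" by (simp add: tr_def)
qed (rule tr_eqI)

lemma teq_rep_tr: "(w, rep (tr R w)) \<in> teq R"
proof -
  have "w \<in> tr R w" by (simp add: tr_def)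
  then have "rep (tr R w) \<in> tr R w" unfolding rep_def by (rule someI)
  then show ?thesis by (simp add: tr_def)
qed

lemma tconc_tr [simp]: "tconc R (tr R u) (tr R v) = tr R (u @ v)"
  unfolding tconc_def by (rule tr_eqI[OF teq_sym], rule teq_append[OF teq_rep_tr teq_rep_tr])

lemma tlen_tr [simp]: "tlen (tr R w) = length w"
  unfolding tlen_def using teq_rep_tr teq_length by metis

lemma tprod_map_tr: "tprod R (map (tr R) ws) = tr R (concat ws)"
  by (induction ws) (simp_all add: tprod_def tunit_def)

lemma tmon_iff: "x \<in> tmon R S \<longleftrightarrow> (\<exists>w. set w \<subseteq> S \<and> x = tr R w)"
  unfolding tmon_def by (auto simp: in_lists_conv_set)

lemma tr_in_tmon_iff [simp]: "tr R w \<in> tmon R S \<longleftrightarrow> set w \<subseteq> S"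
  unfolding tmon_iff tr_eq_iff by (metis teq_refl teq_set)

lemma tmon_subset_range: "tmon R S \<subseteq> range (tr R)"
  unfolding tmon_def by (rule image_mono) simp

lemma inj_on_tconc_letter:
  assumes "sym R"
  shows "inj_on (\<lambda>w. tconc R w (tr R [a])) (range (tr R))"
proof (rule inj_onI)
  fix x y
  assume "x \<in> range (tr R)" "y \<in> range (tr R)" and eq: "tconc R x (tr R [a]) = tconc R y (tr R [a])"
  then obtain u v where uv: "x = tr R u" "y = tr R v" by blast
  have "(u @ [a], v @ [a]) \<in> teq R" using eq unfolding uv by (simp add: tr_eq_iff)
  then show "x = y" unfolding uv using teq_snoc_cancel[OF assms] tr_eqI by blast
qed

lemma tmax_tr: "tmax R (tr R w) = {a. \<exists>y. (w, y @ [a]) \<in> teq R}"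
proof -
  have "tmax R (tr R w) = {a. \<exists>y. tr R w = tr R (y @ [a])}"
    unfolding tmax_def by (auto intro: rangeI)
  then show ?thesis by (simp add: tr_eq_iff)
qed

lemma tmax_subset_set: "tmax R (tr R w) \<subseteq> set w"
  unfolding tmax_tr using teq_set by fastforce

lemma tmax_snoc:
  assumes "sym R"
  shows "tmax R (tr R (y @ [a])) = insert a {b \<in> tmax R (tr R y). (a, b) \<notin> R}"
proof (intro set_eqI iffI)
  fix b
  assume "b \<in> tmax R (tr R (y @ [a]))"
  then obtain z where "(y @ [a], z @ [b]) \<in> teq R" unfolding tmax_tr by blast
  from teq_snoc_last_letter[OF assms this]
  show "b \<in> insert a {b \<in> tmax R (tr R y). (a, b) \<notin> R}"
    unfolding tmax_tr last_letter_rel_def by blast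
next
  fix b
  assume "b \<in> insert a {b \<in> tmax R (tr R y). (a, b) \<notin> R}"
  then consider "b = a" | z where "(a, b) \<notin> R" "(y, z @ [b]) \<in> teq R"
    unfolding tmax_tr by blast
  then show "b \<in> tmax R (tr R (y @ [a]))"
  proof cases
    case 1
    then show ?thesis unfolding tmax_tr using teq_refl by blast
  next
    case (2 z)
    have "(y @ [a], z @ [b, a] @ []) \<in> teq R"
      using teq_append[OF 2(2) teq_refl[of "[a]"]] by simp
    moreover have "(b, a) \<notin> R" using 2(1) assms by (auto simp: sym_def)
    ultimately have "(y @ [a], (z @ [a]) @ [b]) \<in> teq R"
      using teq_swap teq_trans by fastforce
    then show ?thesis unfolding tmax_tr by blast
  qed
qed

lemma tmax_append_right: "b \<in> tmax R (tr R t) \<Longrightarrow> b \<in> tmax R (tr R (s @ t))"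
proof -
  assume "b \<in> tmax R (tr R t)"
  then obtain y where "(t, y @ [b]) \<in> teq R" unfolding tmax_tr by blast
  then have "(s @ t @ [], s @ (y @ [b]) @ []) \<in> teq R" by (rule teq_append_context)
  then have "(s @ t, (s @ y) @ [b]) \<in> teq R" by simp
  then show ?thesis unfolding tmax_tr by blast
qed

lemma tmax_append:
  assumes "sym R" "b \<in> tmax R (tr R (s @ t))"
  shows "b \<in> tmax R (tr R t) \<or> (b \<in> tmax R (tr R s) \<and> (\<forall>c\<in>set t. (c, b) \<notin> R))"
  using assms(2)
proof (induction t arbitrary: b rule: rev_induct)
  case (snoc c t)
  have "b = c \<or> b \<in> {b \<in> tmax R (tr R (s @ t)). (c, b) \<notin> R}"
    using snoc.prems tmax_snoc[OF assms(1), of "s @ t" c] by simp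
  then show ?case
    using snoc.IH tmax_snoc[OF assms(1), of t c] by auto
qed simp

lemma tmax_append_subset: "sym R \<Longrightarrow> tmax R (tr R (s @ t)) \<subseteq> tmax R (tr R s) \<union> tmax R (tr R t)"
  using tmax_append by fastforce

section \<open>The pyramidal decomposition\<close>

definition pyr_base :: "('a \<times> 'a) set \<Rightarrow> 'a set \<Rightarrow> 'a \<Rightarrow> 'a list \<Rightarrow> bool" where
  "pyr_base R S a z \<longleftrightarrow> set z \<subseteq> S - {a} \<and> tmax R (tr R z) \<subseteq> Lnb R S a"

definition pyr_word :: "'a \<Rightarrow> 'a list list \<Rightarrow> 'a list" where
  "pyr_word a zs = concat (map (\<lambda>z. z @ [a]) zs)"

lemma pyr_word_Nil [simp]: "pyr_word a [] = []"
  and pyr_word_Cons [simp]: "pyr_word a (z # zs) = z @ [a] @ pyr_word a zs"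
  and pyr_word_snoc [simp]: "pyr_word a (zs @ [z]) = pyr_word a zs @ z @ [a]"
  by (simp_all add: pyr_word_def)

lemma length_pyr_word: "length (pyr_word a zs) = (\<Sum>z\<leftarrow>zs. length z + 1)"
  by (induction zs) auto

lemma Pyr_iff: "P \<in> Pyr R S a \<longleftrightarrow> (\<exists>z. pyr_base R S a z \<and> P = tr R (z @ [a]))"
proof
  assume "P \<in> Pyr R S a"
  then obtain w where "set w \<subseteq> S - {a}" "tmax R (tr R w) \<subseteq> Lnb R S a"
    "P = tconc R (tr R w) (tr R [a])"
    unfolding Pyr_def tmon_iff by blast
  then show "\<exists>z. pyr_base R S a z \<and> P = tr R (z @ [a])"
    unfolding pyr_base_def by auto
next
  assume "\<exists>z. pyr_base R S a z \<and> P = tr R (z @ [a])"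
  then obtain z where "pyr_base R S a z" "P = tr R (z @ [a])" by blast
  then show "P \<in> Pyr R S a"
    unfolding Pyr_def pyr_base_def by (intro CollectI exI[of _ "tr R z"]) simp
qed

lemma ex_map_conv_pred:
  "\<forall>x\<in>set xs. \<exists>z. Q z \<and> x = f z \<Longrightarrow> \<exists>zs. xs = map f zs \<and> (\<forall>z\<in>set zs. Q z)"
proof (induction xs)
  case (Cons x xs)
  then obtain z zs where "Q z" "x = f z" "xs = map f zs" "\<forall>z\<in>set zs. Q z" by auto
  then show ?case by (intro exI[of _ "z # zs"]) auto
qed simp

lemma teq_snoc_pyramid:
  assumes "sym R" "set u \<subseteq> S - {a}"
  shows "\<exists>s t. (u @ [a], s @ [a] @ t) \<in> teq R \<and> pyr_base R S a s \<and> set t \<subseteq> S - {a}"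
  using assms(2)
proof (induction "length u" arbitrary: u rule: less_induct)
  case less
  show ?case
  proof (cases "tmax R (tr R u) \<subseteq> Lnb R S a")
    case True
    then show ?thesis using less.prems
      by (intro exI[of _ u] exI[of _ "[]"]) (auto simp: pyr_base_def)
  next
    case False
    then obtain c where c: "c \<in> tmax R (tr R u)" "c \<notin> Lnb R S a" by blast
    have cS: "c \<in> S - {a}" using c(1) tmax_subset_set less.prems by fastforce
    then have ca: "(c, a) \<notin> R" using c(2) assms(1) by (auto simp: Lnb_def sym_def)
    obtain u' where u': "(u, u' @ [c]) \<in> teq R" using c(1) unfolding tmax_tr by blast
    have "length u' < length u" "set u' \<subseteq> S - {a}"
      using teq_length[OF u'] teq_set[OF u'] less.prems by auto
    then obtain s t where st: "(u' @ [a], s @ [a] @ t) \<in> teq R" "pyr_base R S a s" "set t \<subseteq> S - {a}"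
      using less.hyps by blast
    \<comment> \<open>\<open>c\<close> commutes with \<open>a\<close>, so it can be moved behind the pyramid of \<open>u'\<close>\<close>
    have "(u @ [a], u' @ [c, a]) \<in> teq R"
      using teq_append[OF u' teq_refl[of "[a]"]] by simp
    moreover have "(u' @ [c, a], u' @ [a, c]) \<in> teq R"
      using teq_swap[OF ca, of u' "[]"] by simp
    moreover have "(u' @ [a, c], s @ [a] @ t @ [c]) \<in> teq R"
      using teq_append[OF st(1) teq_refl[of "[c]"]] by simp
    ultimately have "(u @ [a], s @ [a] @ (t @ [c])) \<in> teq R"
      by (meson teq_trans)
    then show ?thesis using st cS by (intro exI[of _ s] exI[of _ "t @ [c]"]) auto
  qed
qed

lemma pyr_word_exists:
  assumes "sym R" "set w \<subseteq> S"
  shows "\<exists>zs u. (\<forall>z\<in>set zs. pyr_base R S a z) \<and> set u \<subseteq> S - {a} \<and> (w, pyr_word a zs @ u) \<in> teq R"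
  using assms(2)
proof (induction w rule: rev_induct)
  case Nil
  show ?case by (intro exI[of _ "[]"]) simp
next
  case (snoc c w)
  then obtain zs u where zs: "\<forall>z\<in>set zs. pyr_base R S a z" and u: "set u \<subseteq> S - {a}"
    and w: "(w, pyr_word a zs @ u) \<in> teq R"
    by auto
  have wc: "(w @ [c], pyr_word a zs @ u @ [c]) \<in> teq R"
    using teq_append[OF w teq_refl[of "[c]"]] by simp
  show ?case
  proof (cases "c = a")
    case False
    then show ?thesis using zs u wc snoc.prems by (intro exI[of _ zs] exI[of _ "u @ [c]"]) auto
  next
    case True
    obtain s t where st: "(u @ [a], s @ [a] @ t) \<in> teq R" "pyr_base R S a s" "set t \<subseteq> S - {a}"
      using teq_snoc_pyramid[OF assms(1) u] by blast
    have "(pyr_word a zs @ u @ [c], pyr_word a zs @ (s @ [a] @ t) @ []) \<in> teq R"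
      using teq_append_context[OF st(1), of "pyr_word a zs" "[]"] True by simp
    then have "(w @ [c], pyr_word a (zs @ [s]) @ t) \<in> teq R"
      using teq_trans[OF wc] by simp
    then show ?thesis using zs st(2,3) by (intro exI[of _ "zs @ [s]"] exI[of _ t]) auto
  qed
qed

lemma count_list_pyr_word:
  "\<forall>z\<in>set zs. pyr_base R S a z \<Longrightarrow> count_list (pyr_word a zs) a = length zs"
  by (induction zs) (auto simp: pyr_base_def count_list_0_iff)

lemma set_pyr_word: "a \<in> S \<Longrightarrow> \<forall>z\<in>set zs. pyr_base R S a z \<Longrightarrow> set (pyr_word a zs) \<subseteq> S"
  by (induction zs) (auto simp: pyr_base_def)

lemma tmax_pyr_word:
  assumes "sym R" "\<forall>z\<in>set zs. pyr_base R S a z"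
  shows "tmax R (tr R (pyr_word a zs)) \<subseteq> {a}"
  using assms(2)
proof (induction zs rule: rev_induct)
  case (snoc z zs)
  have "tmax R (tr R (pyr_word a zs @ z)) \<subseteq> {a} \<union> Lnb R S a"
    using tmax_append_subset[OF assms(1), of "pyr_word a zs" z] snoc
    unfolding pyr_base_def by auto
  then show ?case
    using tmax_snoc[OF assms(1), of "pyr_word a zs @ z" a] by (auto simp: Lnb_def)
qed (use tmax_subset_set[of R "[]"] in auto)

lemma teq_peel_last:
  assumes "sym R" "(v @ u0 @ [c], v' @ u') \<in> teq R" "tmax R (tr R v') \<subseteq> {a}" "c \<noteq> a"
  obtains u1 where "(u', u1 @ [c]) \<in> teq R" "(v @ u0, v' @ u1) \<in> teq R"
proof -
  have "c \<in> tmax R (tr R (v @ u0 @ [c]))"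
    unfolding tmax_tr by (intro CollectI exI[of _ "v @ u0"]) simp
  then have "c \<in> tmax R (tr R (v' @ u'))"
    using tr_eqI[OF assms(2)] by simp
  then have "c \<in> tmax R (tr R u')"
    using tmax_append[OF assms(1)] assms(3,4) by blast
  then obtain u1 where u1: "(u', u1 @ [c]) \<in> teq R"
    unfolding tmax_tr by blast
  have "(v' @ u', (v' @ u1) @ [c]) \<in> teq R"
    using teq_append_context[OF u1, of v' "[]"] by simp
  then have "((v @ u0) @ [c], (v' @ u1) @ [c]) \<in> teq R"
    using assms(2) teq_trans by fastforce
  then show ?thesis
    using that u1 teq_snoc_cancel[OF assms(1)] by blast
qed

lemma teq_right_factor_unique:
  assumes "sym R" "(v @ u, v' @ u') \<in> teq R" "tmax R (tr R v) \<subseteq> {a}" "tmax R (tr R v') \<subseteq> {a}"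
    "a \<notin> set u" "a \<notin> set u'"
  shows "(v, v') \<in> teq R \<and> (u, u') \<in> teq R"
  using assms(2,5,6)
proof (induction "length u" arbitrary: u u' rule: less_induct)
  case less
  consider "u = []" "u' = []" | "u = []" "u' \<noteq> []" | u0 c where "u = u0 @ [c]"
    by (metis rev_exhaust)
  then show ?case
  proof cases
    case 1
    then show ?thesis using less.prems by simp
  next
    case 2
    then obtain u0 c where u': "u' = u0 @ [c]" by (metis rev_exhaust)
    have "c \<in> tmax R (tr R (v' @ u'))"
      unfolding tmax_tr u' by (intro CollectI exI[of _ "v' @ u0"]) simp
    then have "c \<in> tmax R (tr R v)"
      using tr_eqI[OF less.prems(1)] 2 by simp
    then show ?thesis using assms(3) less.prems(3) u' by auto
  next
    case (3 u0 c)
    have "(v @ u0 @ [c], v' @ u') \<in> teq R" "c \<noteq> a"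
      using less.prems 3 by auto
    then obtain u1 where u1: "(u', u1 @ [c]) \<in> teq R" "(v @ u0, v' @ u1) \<in> teq R"
      by (rule teq_peel_last[OF assms(1) _ assms(4)])
    have "a \<notin> set u1" using teq_set[OF u1(1)] less.prems(3) by auto
    then have IH: "(v, v') \<in> teq R \<and> (u0, u1) \<in> teq R"
      using less.hyps[of u0 u1] u1(2) less.prems(2) 3 by auto
    have "(u0 @ [c], u1 @ [c]) \<in> teq R"
      using teq_append[OF conjunct2[OF IH] teq_refl] .
    then have "(u, u') \<in> teq R"
      using teq_trans[OF _ teq_sym[OF u1(1)]] 3 by simp
    with IH show ?thesis by blast
  qed
qed

lemma pyr_word_unique:
  assumes "sym R" "\<forall>z\<in>set zs. pyr_base R S a z" "\<forall>z\<in>set zs'. pyr_base R S a z"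
    "(pyr_word a zs, pyr_word a zs') \<in> teq R"
  shows "list_all2 (\<lambda>z z'. (z, z') \<in> teq R) zs zs'"
  using assms(2-4)
proof (induction zs arbitrary: zs' rule: rev_induct)
  case Nil
  have "count_list (pyr_word a zs') a = 0"
    using teq_count_list[OF Nil.prems(3), of a] by simp
  then show ?case using count_list_pyr_word[OF Nil.prems(2)] by simp
next
  case (snoc z zs)
  have "length zs' = Suc (length zs)"
    using teq_count_list[OF snoc.prems(3), of a]
      count_list_pyr_word[OF snoc.prems(1)] count_list_pyr_word[OF snoc.prems(2)] by simp
  then obtain zs0 z' where zs': "zs' = zs0 @ [z']" by (metis length_Suc_conv_rev)
  have good: "\<forall>z\<in>set zs. pyr_base R S a z" "\<forall>z\<in>set zs0. pyr_base R S a z"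
    and z: "pyr_base R S a z" "pyr_base R S a z'"
    using snoc.prems zs' by auto
  have "((pyr_word a zs @ z) @ [a], (pyr_word a zs0 @ z') @ [a]) \<in> teq R"
    using snoc.prems(3) zs' by simp
  then have "(pyr_word a zs @ z, pyr_word a zs0 @ z') \<in> teq R"
    by (rule teq_snoc_cancel[OF assms(1)])
  moreover have "a \<notin> set z" "a \<notin> set z'" using z unfolding pyr_base_def by auto
  ultimately have "(pyr_word a zs, pyr_word a zs0) \<in> teq R \<and> (z, z') \<in> teq R"
    using teq_right_factor_unique[OF assms(1)] tmax_pyr_word[OF assms(1) good(1)]
      tmax_pyr_word[OF assms(1) good(2)] by blast
  with snoc.IH[OF good] show ?case using zs' by (auto intro!: list_all2_appendI)
qed

lemma pyr_word_append_unique: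
  assumes "sym R" "\<forall>z\<in>set zs. pyr_base R S a z" "\<forall>z\<in>set zs'. pyr_base R S a z"
    "set u \<subseteq> S - {a}" "set u' \<subseteq> S - {a}" "(pyr_word a zs @ u, pyr_word a zs' @ u') \<in> teq R"
  shows "map (tr R) zs = map (tr R) zs' \<and> tr R u = tr R u'"
proof -
  have "(pyr_word a zs, pyr_word a zs') \<in> teq R \<and> (u, u') \<in> teq R"
    using teq_right_factor_unique[OF assms(1,6)] tmax_pyr_word[OF assms(1,2)]
      tmax_pyr_word[OF assms(1,3)] assms(4,5) by blast
  then have "list_all2 (\<lambda>z z'. (z, z') \<in> teq R) zs zs'" "tr R u = tr R u'"
    using pyr_word_unique[OF assms(1,2,3)] tr_eqI by blast+
  moreover have "list_all2 (\<lambda>z z'. (z, z') \<in> teq R) zs zs' \<Longrightarrow> map (tr R) zs = map (tr R) zs'"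
    by (induction rule: list_all2_induct) (simp_all add: tr_eqI)
  ultimately show ?thesis by blast
qed

lemma map_tr_snoc: "map (\<lambda>z. tr R (z @ [a])) zs = map (\<lambda>w. tconc R w (tr R [a])) (map (tr R) zs)"
  by (induction zs) simp_all

lemma tprod_pyr_word: "tprod R (map (\<lambda>z. tr R (z @ [a])) zs @ [tr R u]) = tr R (pyr_word a zs @ u)"
  using tprod_map_tr[of R "map (\<lambda>z. z @ [a]) zs @ [u]"] by (simp add: comp_def pyr_word_def)

lemma pyr_decomp_pyr_word:
  assumes "sym R" "\<forall>z\<in>set zs. pyr_base R S a z" "set u \<subseteq> S - {a}"
  shows "pyr_decomp R S a (tr R (pyr_word a zs @ u)) = map (\<lambda>z. tr R (z @ [a])) zs @ [tr R u]"
  unfolding pyr_decomp_def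
proof (rule the_equality)
  let ?us = "map (\<lambda>z. tr R (z @ [a])) zs @ [tr R u]"
  have "\<forall>i < length zs. ?us ! i \<in> Pyr R S a"
    unfolding Pyr_iff using assms(2) by (auto simp: nth_append)
  then show "?us \<noteq> [] \<and> tprod R ?us = tr R (pyr_word a zs @ u) \<and> (\<forall>i < length ?us - 1. ?us ! i \<in> Pyr R S a)
      \<and> last ?us \<in> tmon R (S - {a})"
    using tprod_pyr_word[of R a zs u] assms(3) by simp
next
  fix us
  assume us: "us \<noteq> [] \<and> tprod R us = tr R (pyr_word a zs @ u) \<and>
    (\<forall>i < length us - 1. us ! i \<in> Pyr R S a) \<and> last us \<in> tmon R (S - {a})"
  then have "us \<noteq> []" by blast
  then obtain ps l where us_eq: "us = ps @ [l]" by (metis rev_exhaust)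
  from us have "\<forall>i < length us - 1. us ! i \<in> Pyr R S a" by blast
  then have "\<forall>i < length ps. ps ! i \<in> Pyr R S a" unfolding us_eq by (simp add: nth_append)
  then have "\<forall>x\<in>set ps. \<exists>z. pyr_base R S a z \<and> x = tr R (z @ [a])"
    unfolding Pyr_iff by (simp add: all_set_conv_all_nth)
  then obtain zs' where zs': "ps = map (\<lambda>z. tr R (z @ [a])) zs'" "\<forall>z\<in>set zs'. pyr_base R S a z"
    using ex_map_conv_pred[of ps "pyr_base R S a" "\<lambda>z. tr R (z @ [a])"] by blast
  from us have "last us \<in> tmon R (S - {a})" by blast
  then obtain u' where u': "set u' \<subseteq> S - {a}" "l = tr R u'"
    unfolding us_eq tmon_iff by auto
  from us have "tprod R us = tr R (pyr_word a zs @ u)" by blast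
  moreover have "tprod R us = tr R (pyr_word a zs' @ u')"
    unfolding us_eq zs' u' by (rule tprod_pyr_word)
  ultimately have "(pyr_word a zs @ u, pyr_word a zs' @ u') \<in> teq R"
    by (metis tr_eq_iff)
  then have e: "map (tr R) zs = map (tr R) zs' \<and> tr R u = tr R u'"
    by (rule pyr_word_append_unique[OF assms(1,2) zs'(2) assms(3) u'(1)])
  show "us = map (\<lambda>z. tr R (z @ [a])) zs @ [tr R u]"
    unfolding us_eq zs' u' map_tr_snoc conjunct1[OF e] conjunct2[OF e] ..
qed

definition tmon_max :: "('a \<times> 'a) set \<Rightarrow> 'a set \<Rightarrow> 'a set \<Rightarrow> 'a list set set" where
  "tmon_max R S T = {x \<in> tmon R S. tmax R x \<subseteq> T}"

definition pyr_compose :: "('a \<times> 'a) set \<Rightarrow> 'a \<Rightarrow> 'a list set list \<Rightarrow> 'a list set \<Rightarrow> 'a list set" where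
  "pyr_compose R a ws u = tconc R (tprod R (map (\<lambda>w. tconc R w (tr R [a])) ws)) u"

lemma tmon_max_iff: "x \<in> tmon_max R S T \<longleftrightarrow> (\<exists>w. set w \<subseteq> S \<and> tmax R (tr R w) \<subseteq> T \<and> x = tr R w)"
  unfolding tmon_max_def tmon_iff by auto

lemma tmon_max_subset_tmon: "tmon_max R S T \<subseteq> tmon R S"
  unfolding tmon_max_def by auto

lemma tmon_max_pyr_base_iff: "x \<in> tmon_max R (S - {a}) (Lnb R S a) \<longleftrightarrow> (\<exists>z. pyr_base R S a z \<and> x = tr R z)"
  unfolding tmon_max_iff pyr_base_def by auto

lemma pyr_compose_tr: "pyr_compose R a (map (tr R) zs) (tr R u) = tr R (pyr_word a zs @ u)"
proof -
  have "tprod R (map (\<lambda>z. tr R (z @ [a])) zs) = tr R (pyr_word a zs)"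
    using tprod_map_tr[of R "map (\<lambda>z. z @ [a]) zs"] by (simp add: comp_def pyr_word_def)
  then show ?thesis unfolding pyr_compose_def map_tr_snoc[symmetric] by simp
qed

lemma obtain_pyr_words:
  assumes "set ws \<subseteq> tmon_max R (S - {a}) (Lnb R S a)" "u \<in> tmon R (S - {a})"
  obtains zs u0 where "ws = map (tr R) zs" "\<forall>z\<in>set zs. pyr_base R S a z"
    "set u0 \<subseteq> S - {a}" "u = tr R u0"
proof -
  have "\<exists>z. pyr_base R S a z \<and> x = tr R z" if "x \<in> set ws" for x
    using subsetD[OF assms(1) that] unfolding tmon_max_pyr_base_iff .
  then obtain zs where zs: "ws = map (tr R) zs" "\<forall>z\<in>set zs. pyr_base R S a z"
    using ex_map_conv_pred[of ws "pyr_base R S a" "tr R"] by blast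
  obtain u0 where u0: "set u0 \<subseteq> S - {a}" "u = tr R u0"
    using assms(2) unfolding tmon_iff by blast
  show ?thesis by (rule that[OF zs u0])
qed

context
  fixes R :: "('a \<times> 'a) set" and S :: "'a set" and a :: 'a and ws :: "'a list set list" and u :: "'a list set"
  assumes sym: "sym R" and a: "a \<in> S"
    and ws: "set ws \<subseteq> tmon_max R (S - {a}) (Lnb R S a)" and u: "u \<in> tmon R (S - {a})"
begin

lemma pyr_compose_in_tmon: "pyr_compose R a ws u \<in> tmon R S"
proof -
  obtain zs u0 where "ws = map (tr R) zs" "\<forall>z\<in>set zs. pyr_base R S a z" "set u0 \<subseteq> S - {a}" "u = tr R u0"
    using obtain_pyr_words[OF ws u] .
  then show ?thesis using set_pyr_word[OF a] by (auto simp: pyr_compose_tr)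
qed

lemma pyr_decomp_pyr_compose:
  "pyr_decomp R S a (pyr_compose R a ws u) = map (\<lambda>w. tconc R w (tr R [a])) ws @ [u]"
proof -
  obtain zs u0 where z: "ws = map (tr R) zs" "\<forall>z\<in>set zs. pyr_base R S a z" "set u0 \<subseteq> S - {a}" "u = tr R u0"
    using obtain_pyr_words[OF ws u] .
  then show ?thesis
    using pyr_decomp_pyr_word[OF sym z(2,3)] by (simp add: pyr_compose_tr map_tr_snoc)
qed

lemma tlen_pyr_compose: "tlen (pyr_compose R a ws u) = (\<Sum>w\<leftarrow>ws. tlen w + 1) + tlen u"
proof -
  obtain zs u0 where z: "ws = map (tr R) zs" "u = tr R u0"
    using obtain_pyr_words[OF ws u] by metis
  have "(\<Sum>w\<leftarrow>map (tr R) zs. tlen w + 1) = (\<Sum>z\<leftarrow>zs. length z + 1)"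
    by (induction zs) simp_all
  then show ?thesis unfolding z by (simp add: pyr_compose_tr length_pyr_word)
qed

lemma tmax_pyr_compose: "tmax R u \<subseteq> tmax R (pyr_compose R a ws u) \<and> tmax R (pyr_compose R a ws u) \<subseteq> insert a (tmax R u)"
proof -
  obtain zs u0 where z: "ws = map (tr R) zs" "\<forall>z\<in>set zs. pyr_base R S a z" "u = tr R u0"
    using obtain_pyr_words[OF ws u] by metis
  have "tmax R (tr R (pyr_word a zs @ u0)) \<subseteq> insert a (tmax R (tr R u0))"
    using tmax_append_subset[OF sym, of "pyr_word a zs" u0] tmax_pyr_word[OF sym z(2)] by blast
  moreover have "tmax R (tr R u0) \<subseteq> tmax R (tr R (pyr_word a zs @ u0))"
    by (rule subsetI, rule tmax_append_right)
  ultimately show ?thesis unfolding z pyr_compose_tr by blast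
qed

end

lemma pyr_compose_inj:
  assumes "sym R" "a \<in> S"
    "set ws \<subseteq> tmon_max R (S - {a}) (Lnb R S a)" "u \<in> tmon R (S - {a})"
    "set ws' \<subseteq> tmon_max R (S - {a}) (Lnb R S a)" "u' \<in> tmon R (S - {a})"
    "pyr_compose R a ws u = pyr_compose R a ws' u'"
  shows "ws = ws' \<and> u = u'"
proof -
  have "map (\<lambda>w. tconc R w (tr R [a])) ws @ [u] = map (\<lambda>w. tconc R w (tr R [a])) ws' @ [u']"
    using pyr_decomp_pyr_compose[OF assms(1-4)] pyr_decomp_pyr_compose[OF assms(1,2,5,6)] assms(7)
    by simp
  then have eq: "map (\<lambda>w. tconc R w (tr R [a])) ws = map (\<lambda>w. tconc R w (tr R [a])) ws'" "u = u'"
    by auto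
  have "set ws \<union> set ws' \<subseteq> range (tr R)"
    using assms(3,5) tmon_max_subset_tmon tmon_subset_range by blast
  then have "inj_on (\<lambda>w. tconc R w (tr R [a])) (set ws \<union> set ws')"
    by (rule inj_on_subset[OF inj_on_tconc_letter[OF assms(1)]])
  then show ?thesis using eq inj_on_map_eq_map by blast
qed

lemma pyr_compose_surj:
  assumes "sym R" "x \<in> tmon R S"
  obtains ws u where "set ws \<subseteq> tmon_max R (S - {a}) (Lnb R S a)" "u \<in> tmon R (S - {a})"
    "x = pyr_compose R a ws u"
proof -
  obtain w where w: "set w \<subseteq> S" "x = tr R w"
    using assms(2) unfolding tmon_iff by blast
  obtain zs u where zs: "\<forall>z\<in>set zs. pyr_base R S a z" "set u \<subseteq> S - {a}" "(w, pyr_word a zs @ u) \<in> teq R"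
    using pyr_word_exists[OF assms(1) w(1)] by blast
  have "x = pyr_compose R a (map (tr R) zs) (tr R u)"
    unfolding w(2) pyr_compose_tr by (rule tr_eqI[OF zs(3)])
  moreover have "set (map (tr R) zs) \<subseteq> tmon_max R (S - {a}) (Lnb R S a)"
    using zs(1) by (auto simp: tmon_max_pyr_base_iff) blast
  moreover have "tr R u \<in> tmon R (S - {a})" using zs(2) by simp
  ultimately show ?thesis using that by blast
qed

lemma bij_betw_pyr_compose:
  assumes "sym R" "a \<in> S" "a \<in> T"
  shows "bij_betw (\<lambda>(ws, u). pyr_compose R a ws u)
    ({ws. set ws \<subseteq> tmon_max R (S - {a}) (Lnb R S a) \<and> length ws = k} \<times> tmon_max R (S - {a}) T)
    {x \<in> tmon_max R S T. length (pyr_decomp R S a x) - 1 = k}"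
proof -
  let ?D = "{ws. set ws \<subseteq> tmon_max R (S - {a}) (Lnb R S a) \<and> length ws = k} \<times> tmon_max R (S - {a}) T"
  have "ws = ws' \<and> u = u'"
    if "(ws, u) \<in> ?D" "(ws', u') \<in> ?D" "pyr_compose R a ws u = pyr_compose R a ws' u'" for ws u ws' u'
  proof (rule pyr_compose_inj[OF assms(1,2)])
    show "u \<in> tmon R (S - {a})" "u' \<in> tmon R (S - {a})"
      using that(1,2) tmon_max_subset_tmon by auto
  qed (use that in auto)
  then have "inj_on (\<lambda>(ws, u). pyr_compose R a ws u) ?D"
    by (auto simp: inj_on_def)
  moreover have "(\<lambda>(ws, u). pyr_compose R a ws u) ` ?D =
    {x \<in> tmon_max R S T. length (pyr_decomp R S a x) - 1 = k}"
  proof (intro set_eqI iffI)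
    fix x
    assume "x \<in> (\<lambda>(ws, u). pyr_compose R a ws u) ` ?D"
    then obtain ws u where ws: "set ws \<subseteq> tmon_max R (S - {a}) (Lnb R S a)" "length ws = k"
      and u: "u \<in> tmon R (S - {a})" "tmax R u \<subseteq> T" and x: "x = pyr_compose R a ws u"
      unfolding tmon_max_def by auto
    show "x \<in> {x \<in> tmon_max R S T. length (pyr_decomp R S a x) - 1 = k}"
      using pyr_compose_in_tmon[OF assms(1,2) ws(1) u(1)] tmax_pyr_compose[OF assms(1,2) ws(1) u(1)]
        pyr_decomp_pyr_compose[OF assms(1,2) ws(1) u(1)] u(2) ws(2) assms(3)
      unfolding x tmon_max_def by auto
  next
    fix x
    assume x: "x \<in> {x \<in> tmon_max R S T. length (pyr_decomp R S a x) - 1 = k}"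
    then have "x \<in> tmon R S" unfolding tmon_max_def by blast
    then obtain ws u where ws: "set ws \<subseteq> tmon_max R (S - {a}) (Lnb R S a)"
      and u: "u \<in> tmon R (S - {a})" and x_eq: "x = pyr_compose R a ws u"
      by (rule pyr_compose_surj[OF assms(1)])
    have "length ws = k" "tmax R u \<subseteq> T"
      using x pyr_decomp_pyr_compose[OF assms(1,2) ws u] tmax_pyr_compose[OF assms(1,2) ws u]
      unfolding x_eq tmon_max_def by auto
    then show "x \<in> (\<lambda>(ws, u). pyr_compose R a ws u) ` ?D"
      using ws u x_eq unfolding tmon_max_def by auto
  qed
  ultimately show ?thesis by (rule bij_betw_imageI)
qed

lemma power_sum_list_Suc: "(p::'a::comm_monoid_mult) ^ (\<Sum>w\<leftarrow>ws. h w + 1) = prod_list (map (\<lambda>w. p * p ^ h w) ws)"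
  by (induction ws) (simp_all add: power_add mult.assoc)

lemma has_sum_pyr_slice:
  assumes "sym R" "a \<in> S" "a \<in> T" "0 \<le> (p::real)"
    and G: "((\<lambda>x. p ^ tlen x) has_sum zG) (tmon_max R (S - {a}) (Lnb R S a))"
    and H: "((\<lambda>x. p ^ tlen x) has_sum zH) (tmon_max R (S - {a}) T)"
  shows "((\<lambda>x. p ^ tlen x) has_sum ((p * zG) ^ k * zH))
    {x \<in> tmon_max R S T. length (pyr_decomp R S a x) - 1 = k}"
proof -
  let ?G = "tmon_max R (S - {a}) (Lnb R S a)" and ?H = "tmon_max R (S - {a}) T"
  let ?Ws = "{ws. set ws \<subseteq> ?G \<and> length ws = k}"
  have "((\<lambda>ws. prod_list (map (\<lambda>w. p * p ^ tlen w) ws)) has_sum (p * zG) ^ k) ?Ws"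
    using assms(4) has_sum_cmult_right[OF G, of p] by (intro has_sum_prod_list_lists_length) auto
  then have "((\<lambda>(ws, u). prod_list (map (\<lambda>w. p * p ^ tlen w) ws) * p ^ tlen u) has_sum ((p * zG) ^ k * zH))
      (?Ws \<times> ?H)"
    using assms(4) H by (intro has_sum_product_nonneg prod_list_nonneg) auto
  moreover have "p ^ tlen (pyr_compose R a ws u) = prod_list (map (\<lambda>w. p * p ^ tlen w) ws) * p ^ tlen u"
    if "(ws, u) \<in> ?Ws \<times> ?H" for ws u
  proof -
    have "set ws \<subseteq> ?G" "u \<in> tmon R (S - {a})"
      using that tmon_max_subset_tmon by auto
    then show ?thesis
      by (simp only: tlen_pyr_compose[OF assms(1,2)] power_add power_sum_list_Suc)
  qed
  ultimately have "((\<lambda>(ws, u). p ^ tlen (pyr_compose R a ws u)) has_sum ((p * zG) ^ k * zH)) (?Ws \<times> ?H)"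
    by (subst has_sum_cong) auto
  then show ?thesis
    using has_sum_reindex_bij_betw[OF bij_betw_pyr_compose[OF assms(1-3)], of "\<lambda>x. p ^ tlen x"]
    by (simp add: case_prod_unfold)
qed

lemma has_sum_tmon_max_pyr:
  assumes "sym R" "a \<in> S" "a \<in> T" "0 \<le> (p::real)"
    and G: "((\<lambda>x. p ^ tlen x) has_sum zG) (tmon_max R (S - {a}) (Lnb R S a))"
    and H: "((\<lambda>x. p ^ tlen x) has_sum zH) (tmon_max R (S - {a}) T)"
    and "p * zG < 1"
  shows "((\<lambda>x. p ^ tlen x) has_sum (zH / (1 - p * zG))) (tmon_max R S T)"
proof (rule has_sum_partition_nonneg)
  show "((\<lambda>x. p ^ tlen x) has_sum ((p * zG) ^ k * zH))
    {x \<in> tmon_max R S T. length (pyr_decomp R S a x) - 1 = k}" for k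
    by (rule has_sum_pyr_slice[OF assms(1-6)])
  have "zG \<ge> 0" "zH \<ge> 0"
    using has_sum_nonneg[OF G] has_sum_nonneg[OF H] assms(4) by auto
  moreover have "(\<lambda>k. (p * zG) ^ k * zH) sums (1 / (1 - p * zG) * zH)"
    using \<open>zG \<ge> 0\<close> assms(4,7) by (intro sums_mult2 geometric_sums) auto
  ultimately show "((\<lambda>k. (p * zG) ^ k * zH) has_sum (zH / (1 - p * zG))) UNIV"
    using assms(4) by (intro sums_nonneg_imp_has_sum) auto
qed (use assms(4) in simp)

lemma finite_cliques: "finite U \<Longrightarrow> finite (cliques R U)"
  unfolding cliques_def by (rule finite_subset[of _ "Pow U"]) auto

lemma cliques_split:
  assumes "sym R" "a \<in> U" "(a, a) \<in> R"
  shows "cliques R U = cliques R (U - {a}) \<union> insert a ` cliques R (U - {b. (a, b) \<in> R})"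
proof (intro set_eqI iffI)
  fix g
  assume g: "g \<in> cliques R U"
  show "g \<in> cliques R (U - {a}) \<union> insert a ` cliques R (U - {b. (a, b) \<in> R})"
  proof (cases "a \<in> g")
    case True
    then have "g - {a} \<in> cliques R (U - {b. (a, b) \<in> R})" "g = insert a (g - {a})"
      using g unfolding cliques_def by auto
    then show ?thesis by blast
  qed (use g in \<open>auto simp: cliques_def\<close>)
next
  fix g
  assume "g \<in> cliques R (U - {a}) \<union> insert a ` cliques R (U - {b. (a, b) \<in> R})"
  then show "g \<in> cliques R U"
  proof
    assume "g \<in> insert a ` cliques R (U - {b. (a, b) \<in> R})"
    then obtain d where d: "d \<in> cliques R (U - {b. (a, b) \<in> R})" "g = insert a d" by blast
    then have "\<forall>b\<in>d. (a, b) \<notin> R \<and> (b, a) \<notin> R"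
      using assms(1) unfolding cliques_def sym_def by blast
    then show ?thesis using d assms(2) unfolding cliques_def by auto
  qed (auto simp: cliques_def)
qed

lemma mu_split:
  fixes X :: "'b::comm_ring_1"
  assumes "sym R" "finite U" "a \<in> U" "(a, a) \<in> R"
  shows "mu R U X = mu R (U - {a}) X - X * mu R (U - {b. (a, b) \<in> R}) X"
proof -
  let ?C1 = "cliques R (U - {a})" and ?C2 = "cliques R (U - {b. (a, b) \<in> R})"
  have fin: "finite ?C1" "finite ?C2" using assms(2) by (simp_all add: finite_cliques)
  have disj: "?C1 \<inter> insert a ` ?C2 = {}" unfolding cliques_def by auto
  have fin_g: "finite g" and a_g: "a \<notin> g" if "g \<in> ?C2" for g
    using that assms(2,4) unfolding cliques_def by (auto intro: finite_subset)
  then have inj: "inj_on (insert a) ?C2"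
    by (meson inj_onI insert_ident)
  have "mu R U X = (\<Sum>g\<in>?C1. (-1) ^ card g * X ^ card g) + (\<Sum>g\<in>insert a ` ?C2. (-1) ^ card g * X ^ card g)"
    unfolding mu_def cliques_split[OF assms(1,3,4)] using fin disj by (simp add: sum.union_disjoint)
  also have "(\<Sum>g\<in>insert a ` ?C2. (-1) ^ card g * X ^ card g) = (\<Sum>g\<in>?C2. - X * ((-1) ^ card g * X ^ card g))"
    using inj by (simp add: sum.reindex fin_g a_g mult.left_commute)
  also have "\<dots> = - X * mu R (U - {b. (a, b) \<in> R}) X"
    unfolding mu_def by (simp add: sum_distrib_left)
  finally show ?thesis unfolding mu_def by simp
qed

lemma mu_empty [simp]: "mu R {} X = 1"
proof -
  have "cliques R {} = {{}}" unfolding cliques_def by auto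
  then show ?thesis unfolding mu_def by simp
qed

lemma mu_at_zero:
  assumes "finite S"
  shows "mu R S (0::'b::comm_ring_1) = 1"
proof -
  have "mu R S (0::'b) = (\<Sum>g\<in>cliques R S. if g = {} then 1 else 0)"
    unfolding mu_def
  proof (rule sum.cong)
    fix g
    assume "g \<in> cliques R S"
    then have "finite g" using assms unfolding cliques_def by (auto intro: finite_subset)
    then show "(-1) ^ card g * (0::'b) ^ card g = (if g = {} then 1 else 0)" by (simp add: power_0_left)
  qed simp
  also have "\<dots> = 1" using finite_cliques[OF assms] by (simp add: cliques_def)
  finally show ?thesis .
qed

lemma mu_of_real: "mu R S (complex_of_real q) = complex_of_real (mu R S q)"
  unfolding mu_def by simp

lemma mu_tendsto: "((\<lambda>q::real. mu R S q) \<longlongrightarrow> mu R S q0) (at q0 within A)"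
  unfolding mu_def by (intro tendsto_intros)

lemma continuous_on_mu: "continuous_on A (\<lambda>q::real. mu R S q)"
  unfolding mu_def by (intro continuous_intros)

lemma mu_split_Lnb:
  fixes X :: "'b::comm_ring_1"
  assumes "sym R" "finite S" "a \<in> S" "(a, a) \<in> R"
  shows "mu R S X = mu R (S - {a}) X - X * mu R (S - Lnb R S a) X"
proof -
  have "S - {b. (a, b) \<in> R} = S - Lnb R S a" unfolding Lnb_def by auto
  then show ?thesis using mu_split[OF assms] by simp
qed

section \<open>The generating function of traces with prescribed maximal letters\<close>

lemma tmon_max_empty: "tmon_max R {} T = {tr R []}"
  unfolding tmon_max_def using tmax_subset_set[of R "[]"] by (force simp: tmon_iff)

lemma tmax_snoc_subset_insert_iff:
  assumes "sym R" "(a, a) \<in> R" "set y \<subseteq> S"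
  shows "tmax R (tr R (y @ [a])) \<subseteq> insert a T \<longleftrightarrow> tmax R (tr R y) \<subseteq> T \<union> Lnb R S a"
  using tmax_snoc[OF assms(1), of y a] tmax_subset_set[of R y] assms(2,3)
  unfolding Lnb_def by blast

lemma tmon_max_insert:
  assumes "sym R" "a \<in> S" "(a, a) \<in> R"
  shows "tmon_max R S (insert a T) =
    tmon_max R S T \<union> (\<lambda>y. tconc R y (tr R [a])) ` tmon_max R S (T \<union> Lnb R S a)"
proof (intro set_eqI iffI)
  fix x
  assume "x \<in> tmon_max R S (insert a T)"
  then obtain w where w: "set w \<subseteq> S" "tmax R (tr R w) \<subseteq> insert a T" "x = tr R w"
    unfolding tmon_max_iff by blast
  show "x \<in> tmon_max R S T \<union> (\<lambda>y. tconc R y (tr R [a])) ` tmon_max R S (T \<union> Lnb R S a)"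
  proof (cases "a \<in> tmax R (tr R w)")
    case False
    then have "x \<in> tmon_max R S T" using w unfolding tmon_max_iff by blast
    then show ?thesis by blast
  next
    case True
    then obtain y where y: "(w, y @ [a]) \<in> teq R" unfolding tmax_tr by blast
    have "set y \<subseteq> S" using teq_set[OF y] w(1) by auto
    moreover have "tmax R (tr R y) \<subseteq> T \<union> Lnb R S a"
      using w(2) tr_eqI[OF y] tmax_snoc_subset_insert_iff[OF assms(1,3) \<open>set y \<subseteq> S\<close>] by simp
    ultimately have "tr R y \<in> tmon_max R S (T \<union> Lnb R S a)"
      unfolding tmon_max_iff by blast
    moreover have "x = tconc R (tr R y) (tr R [a])" using w(3) tr_eqI[OF y] by simp
    ultimately show ?thesis by blast
  qed
next
  fix x
  assume "x \<in> tmon_max R S T \<union> (\<lambda>y. tconc R y (tr R [a])) ` tmon_max R S (T \<union> Lnb R S a)"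
  then consider "x \<in> tmon_max R S T"
    | y where "y \<in> tmon_max R S (T \<union> Lnb R S a)" "x = tconc R y (tr R [a])"
    by blast
  then show "x \<in> tmon_max R S (insert a T)"
  proof cases
    case 1
    then show ?thesis unfolding tmon_max_def by auto
  next
    case (2 y)
    then obtain w where w: "set w \<subseteq> S" "tmax R (tr R w) \<subseteq> T \<union> Lnb R S a" "x = tr R (w @ [a])"
      unfolding tmon_max_iff by auto
    then show ?thesis
      using tmax_snoc_subset_insert_iff[OF assms(1,3) w(1)] assms(2)
      unfolding tmon_max_iff by (intro exI[of _ "w @ [a]"]) auto
  qed
qed

lemma tmon_max_disjoint_snoc:
  assumes "sym R" "a \<notin> T"
  shows "tmon_max R S T \<inter> (\<lambda>y. tconc R y (tr R [a])) ` tmon_max R S T' = {}"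
proof -
  have "a \<in> tmax R (tconc R y (tr R [a]))" if y: "y \<in> tmon_max R S T'" for y
  proof -
    obtain w where "y = tr R w" using y unfolding tmon_max_iff by blast
    then show ?thesis using tmax_snoc[OF assms(1), of w a] by simp
  qed
  then show ?thesis using assms(2) unfolding tmon_max_def by auto
qed

lemma has_sum_tmon_max_mem:
  fixes p :: real
  assumes "sym R" "finite S" "a \<in> S" "(a, a) \<in> R" "a \<in> T" "0 \<le> p"
    and pos: "mu R S p > 0" "mu R (S - {a}) p > 0"
    and IH: "\<And>T'. ((\<lambda>x. p ^ tlen x) has_sum (mu R (S - {a} - T') p / mu R (S - {a}) p))
      (tmon_max R (S - {a}) T')"
  shows "((\<lambda>x. p ^ tlen x) has_sum (mu R (S - T) p / mu R S p)) (tmon_max R S T)"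
proof -
  let ?zG = "mu R (S - Lnb R S a) p / mu R (S - {a}) p"
  have "S - {a} - Lnb R S a = S - Lnb R S a"
    using assms(3,4) unfolding Lnb_def by auto
  then have G: "((\<lambda>x. p ^ tlen x) has_sum ?zG) (tmon_max R (S - {a}) (Lnb R S a))"
    using IH[of "Lnb R S a"] by simp
  have "S - {a} - T = S - T" using assms(5) by auto
  then have H: "((\<lambda>x. p ^ tlen x) has_sum (mu R (S - T) p / mu R (S - {a}) p)) (tmon_max R (S - {a}) T)"
    using IH[of T] by simp
  have split: "mu R S p = mu R (S - {a}) p - p * mu R (S - Lnb R S a) p"
    by (rule mu_split_Lnb[OF assms(1-4)])
  then have "1 - p * ?zG = mu R S p / mu R (S - {a}) p"
    using pos(2) by (simp add: field_simps)
  moreover have "p * ?zG < 1"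
    using split pos by (simp add: field_simps)
  ultimately show ?thesis
    using has_sum_tmon_max_pyr[OF assms(1,3,5,6) G H] pos by simp
qed

text \<open>Dropping a letter \<open>a\<close> from the allowed maximal letters removes exactly the traces \<open>y a\<close> with
  \<open>max(y) \<subseteq> T \<union> \<L>(a)\<close>; on the Moebius side this is the deletion recurrence for \<open>\<mu>\<^bsub>S-T\<^esub>\<close>.\<close>

lemma has_sum_tmon_max_nonmem:
  fixes p :: real
  assumes "sym R" "finite S" "a \<in> S" "(a, a) \<in> R" "a \<notin> T" "mu R S p > 0"
    and mem: "\<And>T'. a \<in> T' \<Longrightarrow> ((\<lambda>x. p ^ tlen x) has_sum (mu R (S - T') p / mu R S p)) (tmon_max R S T')"
  shows "((\<lambda>x. p ^ tlen x) has_sum (mu R (S - T) p / mu R S p)) (tmon_max R S T)"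
proof -
  let ?L = "Lnb R S a" and ?snoc = "\<lambda>y. tconc R y (tr R [a])"
  have A1: "((\<lambda>x. p ^ tlen x) has_sum (mu R (S - insert a T) p / mu R S p)) (tmon_max R S (insert a T))"
    by (rule mem) simp
  have "tmon_max R S (T \<union> ?L) \<subseteq> range (tr R)"
    using tmon_max_subset_tmon tmon_subset_range by blast
  then have inj: "inj_on ?snoc (tmon_max R S (T \<union> ?L))"
    by (rule inj_on_subset[OF inj_on_tconc_letter[OF assms(1)]])
  have "a \<in> T \<union> ?L" using assms(3,4) unfolding Lnb_def by simp
  then have "((\<lambda>y. p * p ^ tlen y) has_sum (p * (mu R (S - (T \<union> ?L)) p / mu R S p))) (tmon_max R S (T \<union> ?L))"
    using has_sum_cmult_right mem by blast
  moreover have "p * p ^ tlen y = p ^ tlen (?snoc y)" if "y \<in> tmon_max R S (T \<union> ?L)" for y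
    using that unfolding tmon_max_iff by auto
  ultimately have "((\<lambda>y. p ^ tlen (?snoc y)) has_sum (p * (mu R (S - (T \<union> ?L)) p / mu R S p)))
      (tmon_max R S (T \<union> ?L))"
    by (subst has_sum_cong[symmetric]) auto
  then have A2: "((\<lambda>x. p ^ tlen x) has_sum (p * (mu R (S - (T \<union> ?L)) p / mu R S p)))
      (?snoc ` tmon_max R S (T \<union> ?L))"
    using inj by (simp add: has_sum_reindex comp_def)
  have "tmon_max R S T = tmon_max R S (insert a T) - ?snoc ` tmon_max R S (T \<union> ?L)"
    using tmon_max_insert[OF assms(1,3,4), of T] tmon_max_disjoint_snoc[OF assms(1,5)] by blast
  then have "((\<lambda>x. p ^ tlen x) has_sum
      (mu R (S - insert a T) p / mu R S p - p * (mu R (S - (T \<union> ?L)) p / mu R S p))) (tmon_max R S T)"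
    using has_sum_Diff[OF A1 A2] tmon_max_insert[OF assms(1,3,4), of T] by simp
  moreover have "mu R (S - T) p = mu R (S - insert a T) p - p * mu R (S - (T \<union> ?L)) p"
  proof -
    have "S - T - {a} = S - insert a T" "S - T - {b. (a, b) \<in> R} = S - (T \<union> ?L)"
      unfolding Lnb_def by auto
    then show ?thesis using mu_split[OF assms(1) _ _ assms(4), of "S - T" p] assms(2,3,5) by simp
  qed
  ultimately show ?thesis
    using assms(6) by (simp add: diff_divide_distrib)
qed

theorem has_sum_tmon_max:
  fixes p :: real
  assumes "sym R" "finite S" "\<forall>a\<in>S. (a, a) \<in> R" "0 \<le> p" "\<forall>S'\<subseteq>S. mu R S' p > 0"
  shows "((\<lambda>x. p ^ tlen x) has_sum (mu R (S - T) p / mu R S p)) (tmon_max R S T)"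
  using assms(2,3,5)
proof (induction S arbitrary: T rule: finite_induct)
  case empty
  show ?case by (simp add: tmon_max_empty has_sum_finite_iff)
next
  case (insert a F)
  have F: "insert a F - {a} = F" using insert.hyps(2) by auto
  have IH: "((\<lambda>x. p ^ tlen x) has_sum (mu R (insert a F - {a} - T') p / mu R (insert a F - {a}) p))
      (tmon_max R (insert a F - {a}) T')" for T'
    unfolding F using insert.prems by (intro insert.IH) auto
  have mem: "((\<lambda>x. p ^ tlen x) has_sum (mu R (insert a F - T') p / mu R (insert a F) p))
      (tmon_max R (insert a F) T')" if "a \<in> T'" for T'
    using insert.hyps(1) insert.prems by (intro has_sum_tmon_max_mem[OF assms(1) _ _ _ that assms(4) _ _ IH]) (auto simp: F)
  show ?case
  proof (cases "a \<in> T")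
    case True
    then show ?thesis by (rule mem)
  next
    case False
    then show ?thesis
      using insert.hyps(1) insert.prems by (intro has_sum_tmon_max_nonmem[OF assms(1) _ _ _ False _ mem]) auto
  qed
qed

section \<open>Positivity of the Moebius polynomials below \<open>p\<^sub>\<Sigma>\<close>\<close>

lemma tmon_max_self: "tmon_max R S S = tmon R S"
proof -
  have "tmax R x \<subseteq> S" if x: "x \<in> tmon R S" for x
  proof -
    obtain w where "set w \<subseteq> S" "x = tr R w" using x unfolding tmon_iff by blast
    then show ?thesis using tmax_subset_set[of R w] by simp
  qed
  then show ?thesis unfolding tmon_max_def by auto
qed

lemma mu_le_mu_subset:
  fixes q :: real
  assumes "sym R" "finite S" "\<forall>a\<in>S. (a, a) \<in> R" "0 \<le> q" "\<forall>S''\<subseteq>S. mu R S'' q > 0" "S' \<subseteq> S"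
  shows "mu R S q \<le> mu R S' q"
proof -
  have "\<forall>a\<in>S'. (a, a) \<in> R" "\<forall>S''\<subseteq>S'. mu R S'' q > 0"
    using assms(3,5,6) by auto
  from has_sum_tmon_max[OF assms(1) finite_subset[OF assms(6,2)] this(1) assms(4) this(2), of S']
  have "((\<lambda>x. q ^ tlen x) has_sum (1 / mu R S' q)) (tmon R S')"
    by (simp add: tmon_max_self)
  moreover have "((\<lambda>x. q ^ tlen x) has_sum (1 / mu R S q)) (tmon R S)"
    using has_sum_tmon_max[OF assms(1-5), of S] by (simp add: tmon_max_self)
  moreover have "tmon R S' \<subseteq> tmon R S"
    using assms(6) unfolding tmon_def by (intro image_mono lists_mono)
  ultimately have "1 / mu R S' q \<le> 1 / mu R S q"
    by (rule has_sum_mono2) (use assms(4) in simp)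
  then show ?thesis using assms(5,6) by (simp add: divide_simps)
qed

lemma p_root_le_real_root:
  assumes "mu R S q = (0::real)"
  shows "p_root R S \<le> \<bar>q\<bar>"
proof -
  have "complex_of_real q \<in> {z. mu R S z = 0}"
    using assms by (simp add: mu_of_real)
  then have "cmod (complex_of_real q) \<in> cmod ` {z. mu R S z = 0}"
    by (rule imageI)
  moreover have "bdd_below (cmod ` {z::complex. mu R S z = 0})"
    by (rule bdd_belowI[of _ 0]) auto
  ultimately have "Inf (cmod ` {z. mu R S z = 0}) \<le> cmod (complex_of_real q)"
    by (rule cInf_lower)
  then show ?thesis unfolding p_root_def by simp
qed

text \<open>If some \<open>\<mu>\<^bsub>S'\<^esub>\<close> vanished on \<open>(0, p]\<close>, at the first such point \<open>q\<^sub>0\<close> the monotonicity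
  \<open>\<mu>\<^sub>S \<le> \<mu>\<^bsub>S'\<^esub>\<close> valid on \<open>(0, q\<^sub>0)\<close> would force \<open>\<mu>\<^sub>S(q\<^sub>0) = 0\<close>, contradicting \<open>q\<^sub>0 \<le> p < p\<^sub>S\<close>.\<close>

theorem mu_pos_below_p_root:
  fixes p :: real
  assumes "sym R" "finite S" "\<forall>a\<in>S. (a, a) \<in> R" "0 < p" "p < p_root R S"
  shows "\<forall>S'\<subseteq>S. mu R S' p > 0"
proof (rule ccontr)
  define A where "A = {0..p} \<inter> (\<Union>S'\<in>Pow S. {q. mu R S' q \<le> 0})"
  assume "\<not> (\<forall>S'\<subseteq>S. mu R S' p > 0)"
  then obtain S1 where "S1 \<subseteq> S" "mu R S1 p \<le> 0" by (auto simp: not_less)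
  then have "p \<in> A" unfolding A_def using assms(4) by auto
  have "closed {q::real. mu R S' q \<le> 0}" for S'
    by (rule closed_Collect_le[OF continuous_on_mu continuous_on_const])
  then have closed: "closed A"
    unfolding A_def using assms(2) by (intro closed_Int closed_UN closed_atLeastAtMost) simp_all
  have bdd: "bdd_below A" unfolding A_def by (rule bdd_belowI[of _ 0]) auto
  have "Inf A \<in> A" using \<open>p \<in> A\<close> by (intro closed_contains_Inf bdd closed) blast
  then obtain S0 where S0: "S0 \<subseteq> S" "mu R S0 (Inf A) \<le> 0" and q0: "0 \<le> Inf A" "Inf A \<le> p"
    unfolding A_def by auto
  have "mu R S0 (0::real) = 1"
    by (rule mu_at_zero[OF finite_subset[OF S0(1) assms(2)]])
  then have "Inf A \<noteq> 0" using S0(2) by auto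
  with q0 have q0_pos: "Inf A > 0" by simp
  have pos: "\<forall>S'\<subseteq>S. mu R S' q > 0" if "0 < q" "q < Inf A" for q
  proof (rule ccontr)
    assume "\<not> (\<forall>S'\<subseteq>S. mu R S' q > 0)"
    then obtain S1 where "S1 \<subseteq> S" "mu R S1 q \<le> 0" by (auto simp: not_less)
    then have "q \<in> A" unfolding A_def using that q0 by auto
    then have "Inf A \<le> q" using bdd by (rule cInf_lower)
    then show False using that by simp
  qed
  have ev: "eventually (\<lambda>q. mu R S q \<le> mu R S0 q \<and> 0 \<le> mu R S q) (at_left (Inf A))"
    using eventually_at_left_real[OF q0_pos]
  proof eventually_elim
    case (elim q)
    then have q: "0 < q" "q < Inf A" by auto
    then have all_pos: "\<forall>S'\<subseteq>S. mu R S' q > 0" by (rule pos)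
    then have "0 < mu R S q" by blast
    then show ?case
      using mu_le_mu_subset[OF assms(1-3) _ all_pos S0(1)] q(1) by simp
  qed
  have nontriv: "at_left (Inf A) \<noteq> (bot :: real filter)" by simp
  have "mu R S (Inf A) \<le> mu R S0 (Inf A)"
    by (rule tendsto_le[OF nontriv mu_tendsto mu_tendsto]) (rule eventually_mono[OF ev], simp)
  moreover have "0 \<le> mu R S (Inf A)"
    by (rule tendsto_le[OF nontriv mu_tendsto tendsto_const]) (rule eventually_mono[OF ev], simp)
  ultimately have "mu R S (Inf A) = 0" using S0(2) by simp
  then have "p_root R S \<le> \<bar>Inf A\<bar>" by (rule p_root_le_real_root)
  with q0 assms(5) show False by linarith
qed

section \<open>The law of the pyramidal decomposition\<close>

lemma D_prob_infsum:
  assumes "mu R S p \<noteq> (0::real)" "((\<lambda>x. p ^ tlen x) has_sum Z) (tmon_max R S T)"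
  shows "D_prob R S T p A = infsum (\<lambda>x. p ^ tlen x) (A \<inter> tmon_max R S T) / Z"
proof -
  have "B_prob R S p A' = mu R S p * infsum (\<lambda>x. p ^ tlen x) (A' \<inter> tmon R S)" for A'
  proof -
    have "B_prob R S p A' = infsum (\<lambda>x. mu R S p * p ^ tlen x) (A' \<inter> tmon R S)"
      unfolding B_prob_def by (rule infsum_cong_neutral) (auto simp: B_weight_def)
    then show ?thesis by (simp add: infsum_cmult_right')
  qed
  moreover have "A \<inter> {x. tmax R x \<subseteq> T} \<inter> tmon R S = A \<inter> tmon_max R S T"
    "{x. tmax R x \<subseteq> T} \<inter> tmon R S = tmon_max R S T"
    unfolding tmon_max_def by auto
  ultimately show ?thesis
    unfolding D_prob_def using assms by (simp add: infsumI)
qed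

lemma D_prob_singleton:
  assumes "mu R S p \<noteq> (0::real)" "((\<lambda>x. p ^ tlen x) has_sum Z) (tmon_max R S T)"
  shows "D_prob R S T p {x} = (if x \<in> tmon_max R S T then p ^ tlen x else 0) / Z"
  using D_prob_infsum[OF assms, of "{x}"] by simp

lemma prod_list_nth: "prod_list (map f xs) = (\<Prod>i<length xs. f (xs ! i))"
  by (induction xs) (simp_all add: prod.lessThan_Suc_shift del: prod.lessThan_Suc)

lemma pyr_decomp_event:
  assumes "sym R" "a \<in> S" "a \<in> T" "length ws = k" "set ws \<subseteq> tmon R (S - {a})"
  shows "{x. pyr_decomp R S a x = map (\<lambda>w. tconc R w (tr R [a])) ws @ [u]}
      \<inter> {x. length (pyr_decomp R S a x) - 1 = k} \<inter> tmon_max R S T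
    = (if set ws \<subseteq> tmon_max R (S - {a}) (Lnb R S a) \<and> u \<in> tmon_max R (S - {a}) T
       then {pyr_compose R a ws u} else {})" (is "?E = _")
proof (intro set_eqI iffI)
  fix x
  assume x: "x \<in> ?E"
  then have "x \<in> tmon R S" unfolding tmon_max_def by auto
  then obtain ws' u' where ws': "set ws' \<subseteq> tmon_max R (S - {a}) (Lnb R S a)"
    and u': "u' \<in> tmon R (S - {a})" and x_eq: "x = pyr_compose R a ws' u'"
    by (rule pyr_compose_surj[OF assms(1)])
  have "map (\<lambda>w. tconc R w (tr R [a])) ws' @ [u'] = map (\<lambda>w. tconc R w (tr R [a])) ws @ [u]"
    using x pyr_decomp_pyr_compose[OF assms(1,2) ws' u'] x_eq by simp
  then have eq: "map (\<lambda>w. tconc R w (tr R [a])) ws' = map (\<lambda>w. tconc R w (tr R [a])) ws" "u' = u"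
    by auto
  have "set ws' \<union> set ws \<subseteq> range (tr R)"
    using ws' assms(5) tmon_max_subset_tmon tmon_subset_range by blast
  then have "inj_on (\<lambda>w. tconc R w (tr R [a])) (set ws' \<union> set ws)"
    by (rule inj_on_subset[OF inj_on_tconc_letter[OF assms(1)]])
  then have "ws' = ws" using eq(1) by (simp add: inj_on_map_eq_map)
  moreover have "tmax R u \<subseteq> T"
    using eq(2) tmax_pyr_compose[OF assms(1,2) ws' u'] x x_eq unfolding tmon_max_def by auto
  ultimately show "x \<in> (if set ws \<subseteq> tmon_max R (S - {a}) (Lnb R S a) \<and> u \<in> tmon_max R (S - {a}) T
       then {pyr_compose R a ws u} else {})"
    using ws' u' x_eq eq(2) unfolding tmon_max_def by simp
next
  fix x
  assume "x \<in> (if set ws \<subseteq> tmon_max R (S - {a}) (Lnb R S a) \<and> u \<in> tmon_max R (S - {a}) T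
       then {pyr_compose R a ws u} else {})"
  then have ws: "set ws \<subseteq> tmon_max R (S - {a}) (Lnb R S a)" and u: "u \<in> tmon R (S - {a})" "tmax R u \<subseteq> T"
    and x: "x = pyr_compose R a ws u"
    unfolding tmon_max_def by (auto split: if_splits)
  have "tmax R x \<subseteq> T"
    using tmax_pyr_compose[OF assms(1,2) ws u(1)] u(2) assms(3) unfolding x by blast
  then have "x \<in> tmon_max R S T"
    using pyr_compose_in_tmon[OF assms(1,2) ws u(1)] unfolding x tmon_max_def by simp
  moreover have "pyr_decomp R S a x = map (\<lambda>w. tconc R w (tr R [a])) ws @ [u]"
    unfolding x by (rule pyr_decomp_pyr_compose[OF assms(1,2) ws u(1)])
  ultimately show "x \<in> ?E" using assms(4) by simp
qed

context
  fixes R :: "('a \<times> 'a) set" and Sg T :: "'a set" and a1 :: 'a and p :: real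
  assumes fin: "finite Sg" and refl: "\<forall>a\<in>Sg. (a, a) \<in> R" and symm: "sym R"
    and p_pos: "0 < p" and pos: "\<forall>S'\<subseteq>Sg. mu R S' p > 0"
    and a1: "a1 \<in> Sg" and T: "T \<subseteq> Sg" "a1 \<in> T"
begin

lemma has_sum_pyramid_factors:
  "((\<lambda>x. p ^ tlen x) has_sum (mu R (Sg - Lnb R Sg a1) p / mu R (Sg - {a1}) p))
     (tmon_max R (Sg - {a1}) (Lnb R Sg a1))"
  "((\<lambda>x. p ^ tlen x) has_sum (mu R (Sg - T) p / mu R (Sg - {a1}) p)) (tmon_max R (Sg - {a1}) T)"
  "((\<lambda>x. p ^ tlen x) has_sum (mu R (Sg - T) p / mu R Sg p)) (tmon_max R Sg T)"
proof -
  have "\<forall>a\<in>Sg - {a1}. (a, a) \<in> R" "\<forall>S'\<subseteq>Sg - {a1}. mu R S' p > 0"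
    using refl pos by auto
  note has_sum = has_sum_tmon_max[OF symm _ this(1) _ this(2)]
  have "Sg - {a1} - Lnb R Sg a1 = Sg - Lnb R Sg a1" "Sg - {a1} - T = Sg - T"
    using a1 refl T(2) unfolding Lnb_def by auto
  then show "((\<lambda>x. p ^ tlen x) has_sum (mu R (Sg - Lnb R Sg a1) p / mu R (Sg - {a1}) p))
      (tmon_max R (Sg - {a1}) (Lnb R Sg a1))"
    "((\<lambda>x. p ^ tlen x) has_sum (mu R (Sg - T) p / mu R (Sg - {a1}) p)) (tmon_max R (Sg - {a1}) T)"
    using has_sum[of "Lnb R Sg a1"] has_sum[of T] fin p_pos by simp_all
  show "((\<lambda>x. p ^ tlen x) has_sum (mu R (Sg - T) p / mu R Sg p)) (tmon_max R Sg T)"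
    using has_sum_tmon_max[OF symm fin refl _ pos] p_pos by simp
qed

lemma D_prob_pyr_count_eq:
  "D_prob R Sg T p {x. length (pyr_decomp R Sg a1 x) - 1 = k} =
    (p * (mu R (Sg - Lnb R Sg a1) p / mu R (Sg - {a1}) p)) ^ k * (mu R (Sg - T) p / mu R (Sg - {a1}) p)
      / (mu R (Sg - T) p / mu R Sg p)"
proof -
  have "mu R Sg p \<noteq> 0" using pos by auto
  then have "D_prob R Sg T p {x. length (pyr_decomp R Sg a1 x) - 1 = k} =
      infsum (\<lambda>x. p ^ tlen x) ({x. length (pyr_decomp R Sg a1 x) - 1 = k} \<inter> tmon_max R Sg T)
        / (mu R (Sg - T) p / mu R Sg p)"
    by (rule D_prob_infsum[OF _ has_sum_pyramid_factors(3)])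
  also have "{x. length (pyr_decomp R Sg a1 x) - 1 = k} \<inter> tmon_max R Sg T =
      {x \<in> tmon_max R Sg T. length (pyr_decomp R Sg a1 x) - 1 = k}" by auto
  also have "infsum (\<lambda>x. p ^ tlen x) {x \<in> tmon_max R Sg T. length (pyr_decomp R Sg a1 x) - 1 = k} =
      (p * (mu R (Sg - Lnb R Sg a1) p / mu R (Sg - {a1}) p)) ^ k * (mu R (Sg - T) p / mu R (Sg - {a1}) p)"
    using has_sum_pyr_slice[OF symm a1 T(2) _ has_sum_pyramid_factors(1,2)] p_pos by (simp add: infsumI)
  finally show ?thesis .
qed

lemma D_prob_pyr_count:
  defines "r \<equiv> p * mu R (Sg - Lnb R Sg a1) p / mu R (Sg - {a1}) p"
  shows "D_prob R Sg T p {x. length (pyr_decomp R Sg a1 x) - 1 = k} = (1 - r) * r ^ k"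
proof -
  have "mu R Sg p = mu R (Sg - {a1}) p - p * mu R (Sg - Lnb R Sg a1) p"
    using refl a1 by (intro mu_split_Lnb[OF symm fin a1]) simp
  moreover have "mu R (Sg - T) p > 0" "mu R (Sg - {a1}) p > 0"
    using pos by auto
  ultimately have ratio: "(mu R (Sg - T) p / mu R (Sg - {a1}) p) / (mu R (Sg - T) p / mu R Sg p) = 1 - r"
    unfolding r_def by (simp add: field_simps)
  have "p * (mu R (Sg - Lnb R Sg a1) p / mu R (Sg - {a1}) p) = r" by (simp add: r_def)
  then show ?thesis
    unfolding D_prob_pyr_count_eq ratio[symmetric]
    by (simp only: times_divide_eq_left times_divide_eq_right mult.commute)
qed

lemma D_prob_pyr_decomp:
  assumes ws: "length ws = k" "set ws \<subseteq> tmon R (Sg - {a1})"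
  shows "D_prob R Sg T p ({x. pyr_decomp R Sg a1 x = map (\<lambda>w. tconc R w (tr R [a1])) ws @ [u]}
      \<inter> {x. length (pyr_decomp R Sg a1 x) - 1 = k}) / D_prob R Sg T p {x. length (pyr_decomp R Sg a1 x) - 1 = k}
    = (\<Prod>i<k. D_prob R (Sg - {a1}) (Lnb R Sg a1) p {ws ! i}) * D_prob R (Sg - {a1}) T p {u}"
proof -
  let ?g = "\<lambda>x. p ^ tlen x" and ?G = "tmon_max R (Sg - {a1}) (Lnb R Sg a1)" and ?H = "tmon_max R (Sg - {a1}) T"
  define zG where "zG = mu R (Sg - Lnb R Sg a1) p / mu R (Sg - {a1}) p"
  define zH where "zH = mu R (Sg - T) p / mu R (Sg - {a1}) p"
  define zT where "zT = mu R (Sg - T) p / mu R Sg p"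
  have mu_pos: "mu R S' p > 0" if "S' \<subseteq> Sg" for S'
    using pos that by blast
  then have "zG > 0" "zH > 0" "zT > 0"
    unfolding zG_def zH_def zT_def by (simp_all add: Diff_subset)
  have "mu R Sg p \<noteq> 0" "mu R (Sg - {a1}) p \<noteq> 0"
    using mu_pos[of Sg] mu_pos[of "Sg - {a1}"] by force+
  note D_prob_G = D_prob_singleton[OF this(2) has_sum_pyramid_factors(1)[folded zG_def]]
    and D_prob_H = D_prob_singleton[OF this(2) has_sum_pyramid_factors(2)[folded zH_def]]
  have D_prob_E: "D_prob R Sg T p ({x. pyr_decomp R Sg a1 x = map (\<lambda>w. tconc R w (tr R [a1])) ws @ [u]}
      \<inter> {x. length (pyr_decomp R Sg a1 x) - 1 = k}) =
    (if set ws \<subseteq> ?G \<and> u \<in> ?H then ?g (pyr_compose R a1 ws u) else 0) / zT"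
    using D_prob_infsum[OF \<open>mu R Sg p \<noteq> 0\<close> has_sum_pyramid_factors(3)[folded zT_def]]
      pyr_decomp_event[OF symm a1 T(2) ws, of u] by (simp add: Int_assoc)
  have D_prob_K: "D_prob R Sg T p {x. length (pyr_decomp R Sg a1 x) - 1 = k} = (p * zG) ^ k * zH / zT"
    unfolding D_prob_pyr_count_eq zG_def zH_def zT_def ..
  show ?thesis
  proof (cases "set ws \<subseteq> ?G \<and> u \<in> ?H")
    case True
    then have "u \<in> tmon R (Sg - {a1})" using tmon_max_subset_tmon by blast
    then have "?g (pyr_compose R a1 ws u) = prod_list (map (\<lambda>w. p * ?g w) ws) * ?g u"
      by (simp only: tlen_pyr_compose[OF symm a1 conjunct1[OF True]] power_add power_sum_list_Suc)
    also have "\<dots> = (\<Prod>i<k. p * ?g (ws ! i)) * ?g u"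
      by (simp only: prod_list_nth ws(1))
    finally have "?g (pyr_compose R a1 ws u) = (\<Prod>i<k. p * ?g (ws ! i)) * ?g u" .
    moreover have "(\<Prod>i<k. D_prob R (Sg - {a1}) (Lnb R Sg a1) p {ws ! i}) = (\<Prod>i<k. ?g (ws ! i) / zG)"
    proof (rule prod.cong)
      fix i
      assume "i \<in> {..<k}"
      then have "ws ! i \<in> set ws" using ws(1) by simp
      then have "ws ! i \<in> ?G" using True by blast
      then show "D_prob R (Sg - {a1}) (Lnb R Sg a1) p {ws ! i} = ?g (ws ! i) / zG"
        by (simp add: D_prob_G)
    qed simp
    ultimately show ?thesis
      unfolding D_prob_E D_prob_K D_prob_H using True \<open>zG > 0\<close> \<open>zH > 0\<close> \<open>zT > 0\<close> p_pos
      by (simp add: prod.distrib prod_dividef field_simps power_mult_distrib)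
  next
    case False
    then have "(\<Prod>i<k. D_prob R (Sg - {a1}) (Lnb R Sg a1) p {ws ! i}) * D_prob R (Sg - {a1}) T p {u} = 0"
      using ws(1) by (auto simp: D_prob_G D_prob_H in_set_conv_nth)
    then show ?thesis unfolding D_prob_E if_not_P[OF False] by simp
  qed
qed

end

theorem theorem1p7:
  fixes R :: "('a \<times> 'a) set" and Sg T :: "'a set" and a1 :: 'a and p :: real
  assumes fin: "finite Sg"
    and refl: "\<forall>a\<in>Sg. (a, a) \<in> R"
    and symm: "sym R"
    and p_pos: "0 < p" and p_lt: "p < p_root R Sg"
    and a1: "a1 \<in> Sg"
    and T: "T \<subseteq> Sg" "a1 \<in> T"
  defines "r \<equiv> p * mu R (Sg - Lnb R Sg a1) p / mu R (Sg - {a1}) p"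
    and "K \<equiv> (\<lambda>x. length (pyr_decomp R Sg a1 x) - 1)"
  shows "mu R (Sg - {a1}) p > 0 \<and>
     r = 1 - mu R Sg p / mu R (Sg - {a1}) p \<and>
     (\<forall>k::nat. D_prob R Sg T p {x. K x = k} = (1 - r) * r ^ k) \<and>
     (\<forall>k::nat. \<forall>ws u. length ws = k \<and> set ws \<subseteq> tmon R (Sg - {a1}) \<and> u \<in> tmon R Sg \<longrightarrow>
           D_prob R Sg T p ({x. pyr_decomp R Sg a1 x = map (\<lambda>w. tconc R w (tr R [a1])) ws @ [u]}
                                \<inter> {x. K x = k}) / D_prob R Sg T p {x. K x = k}
           = (\<Prod>i<k. D_prob R (Sg - {a1}) (Lnb R Sg a1) p {ws ! i})
             * D_prob R (Sg - {a1}) T p {u})"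
proof -
  have pos: "\<forall>S'\<subseteq>Sg. mu R S' p > 0"
    by (rule mu_pos_below_p_root[OF symm fin refl p_pos p_lt])
  then have pos_a1: "mu R (Sg - {a1}) p > 0" by auto
  have "mu R Sg p = mu R (Sg - {a1}) p - p * mu R (Sg - Lnb R Sg a1) p"
    using refl a1 by (intro mu_split_Lnb[OF symm fin a1]) simp
  with pos_a1 have "r = 1 - mu R Sg p / mu R (Sg - {a1}) p"
    unfolding r_def by (simp add: field_simps)
  moreover have "\<forall>k. D_prob R Sg T p {x. K x = k} = (1 - r) * r ^ k"
    unfolding K_def r_def using D_prob_pyr_count[OF fin refl symm p_pos pos a1 T] by blast
  moreover have "\<forall>k ws u. length ws = k \<and> set ws \<subseteq> tmon R (Sg - {a1}) \<and> u \<in> tmon R Sg \<longrightarrow>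
      D_prob R Sg T p ({x. pyr_decomp R Sg a1 x = map (\<lambda>w. tconc R w (tr R [a1])) ws @ [u]}
        \<inter> {x. K x = k}) / D_prob R Sg T p {x. K x = k}
      = (\<Prod>i<k. D_prob R (Sg - {a1}) (Lnb R Sg a1) p {ws ! i}) * D_prob R (Sg - {a1}) T p {u}"
    unfolding K_def using D_prob_pyr_decomp[OF fin refl symm p_pos pos a1 T] by blast
  ultimately show ?thesis using pos_a1 by blast
qed

end
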